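(* A countably based topological space $X$ is quasi-Polish if and only if there is an admissible representation $\rho\colon\subseteq\omega^\omega\to X$ of $X$ such that $\mathrm{dom}(\rho)$ (with the subspace topology from $\omega^\omega$) is a Polish space.
   Context: $\omega^\omega$ carries the product (Baire space) topology. A partial function $f\colon\subseteq A\to B$ is continuous if preimages of open sets are open in $\mathrm{dom}(f)$ with its subspace topology. A partial continuous function $\rho\colon\subseteq\omega^\omega\to X$ is an admissible representation of $X$ if for every partial continuous $f\colon\subseteq\omega^\omega\to X$ there is a partial continuous $g\colon\subseteq\omega^\omega\to\omega^\omega$ with $f=\rho\circ g$. A quasi-metric on a set $X$ is a function $d\colon X\times X\to[0,\infty)$ with $x=y$ iff $d(x,y)=d(y,x)=0$ and $d(x,z)\le d(x,y)+d(y,z)$; it induces the topology generated by $B_d(x,\varepsilon)=\{y\mid d(x,y)<\varepsilon\}$; $\widehat d(x,y)=\max\{d(x,y),d(y,x)\}$. $(x_n)$ is Cauchy if for every $\varepsilon>0$ there is $n_0$ with $d(x_n,x_m)<\varepsilon$ for all $m\ge n\ge n_0$; $d$ is complete if every Cauchy sequence converges in the topology of $\widehat d$. A space is quasi-Polish if it is countably based and its topology is induced by a complete quasi-metric. *)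

theory Defs
  imports "HOL-Analysis.Analysis"
begin

definition baire_space :: "(nat \<Rightarrow> nat) topology" where
  "baire_space = product_topology (\<lambda>_. discrete_topology (UNIV :: nat set)) UNIV"

definition Polish_space :: "'a topology \<Rightarrow> bool" where
  "Polish_space X \<longleftrightarrow> completely_metrizable_space X \<and> separable_space X"

text \<open>A partial continuous map from Baire space to X is represented by its domain D
  together with a total HOL function that matters only on D.\<close>
definition admissible_rep :: "'a topology \<Rightarrow> (nat \<Rightarrow> nat) set \<Rightarrow> ((nat \<Rightarrow> nat) \<Rightarrow> 'a) \<Rightarrow> bool" where
  "admissible_rep X D \<rho> \<longleftrightarrow>
     continuous_map (subtopology baire_space D) X \<rho> \<and>
     (\<forall>(F :: (nat \<Rightarrow> nat) set) f. continuous_map (subtopology baire_space F) X f \<longrightarrow>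
        (\<exists>E g. continuous_map (subtopology baire_space E) baire_space g \<and>
               F = {p \<in> E. g p \<in> D} \<and> (\<forall>p\<in>F. f p = \<rho> (g p))))"

definition quasi_metric_on :: "'a set \<Rightarrow> ('a \<Rightarrow> 'a \<Rightarrow> real) \<Rightarrow> bool" where
  "quasi_metric_on S d \<longleftrightarrow>
     (\<forall>x\<in>S. \<forall>y\<in>S. d x y \<ge> 0) \<and>
     (\<forall>x\<in>S. \<forall>y\<in>S. x = y \<longleftrightarrow> d x y = 0 \<and> d y x = 0) \<and>
     (\<forall>x\<in>S. \<forall>y\<in>S. \<forall>z\<in>S. d x z \<le> d x y + d y z)"

definition qball :: "'a set \<Rightarrow> ('a \<Rightarrow> 'a \<Rightarrow> real) \<Rightarrow> 'a \<Rightarrow> real \<Rightarrow> 'a set" where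
  "qball S d x e = {y \<in> S. d x y < e}"

definition qtopology :: "'a set \<Rightarrow> ('a \<Rightarrow> 'a \<Rightarrow> real) \<Rightarrow> 'a topology" where
  "qtopology S d = topology_generated_by {qball S d x e | x e. x \<in> S \<and> e > 0}"

definition qhat :: "('a \<Rightarrow> 'a \<Rightarrow> real) \<Rightarrow> 'a \<Rightarrow> 'a \<Rightarrow> real" where
  "qhat d x y = max (d x y) (d y x)"

definition qcauchy :: "('a \<Rightarrow> 'a \<Rightarrow> real) \<Rightarrow> (nat \<Rightarrow> 'a) \<Rightarrow> bool" where
  "qcauchy d s \<longleftrightarrow> (\<forall>e>0. \<exists>n0. \<forall>n m. n0 \<le> n \<and> n \<le> m \<longrightarrow> d (s n) (s m) < e)"

definition qcomplete :: "'a set \<Rightarrow> ('a \<Rightarrow> 'a \<Rightarrow> real) \<Rightarrow> bool" where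
  "qcomplete S d \<longleftrightarrow>
     (\<forall>s. range s \<subseteq> S \<and> qcauchy d s \<longrightarrow>
        (\<exists>l. limitin (qtopology S (qhat d)) s l sequentially))"

definition quasi_Polish :: "'a topology \<Rightarrow> bool" where
  "quasi_Polish X \<longleftrightarrow> second_countable X \<and>
     (\<exists>d. quasi_metric_on (topspace X) d \<and> X = qtopology (topspace X) d \<and>
          qcomplete (topspace X) d)"

end

theory Submission
  imports Defs
begin

text \<open>Fix an enumerated base \<open>B\<close> of \<open>X\<close> and code each point \<open>x\<close> by the set of indices \<open>n\<close>
  with \<open>x \<in> B n\<close>. Both sides of the equivalence amount to the set of codes being a \<open>\<Pi>\<^sup>0\<^sub>2\<close>
  subset of \<open>\<P>(\<omega>)\<close> with its Scott topology, i.e. being cut out by countably many conditions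
  ``if the code contains the finite set \<open>F i\<close>, it contains some \<open>j\<close> with \<open>J i j\<close>''.
  Such a presentation makes the domain of the standard representation (enumerations of codes) a
  \<open>G\<^sub>\<delta>\<close> subset of Baire space, and it yields a complete quasi-metric as a weighted sum over
  the conditions. Conversely, a presentation is obtained from a complete quasi-metric by chains of
  shrinking balls, whose centres converge, and from an admissible representation with
  \<open>G\<^sub>\<delta>\<close> domain by chains of prefixes of names, whose limit stays in the domain.
  Admissibility also forces \<open>T\<^sub>0\<close>, by a cardinality argument.\<close>

section \<open>Baire space\<close>

definition cylinder :: "nat list \<Rightarrow> (nat \<Rightarrow> nat) set" where
  "cylinder s = {p. \<forall>k<length s. p k = s ! k}"

definition seq_prefix :: "(nat \<Rightarrow> nat) \<Rightarrow> nat \<Rightarrow> nat list" where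
  "seq_prefix p K = map p [0..<K]"

lemma length_seq_prefix [simp]: "length (seq_prefix p K) = K"
  by (simp add: seq_prefix_def)

lemma mem_cylinder_seq_prefix: "q \<in> cylinder (seq_prefix p K) \<longleftrightarrow> (\<forall>k<K. q k = p k)"
  by (simp add: cylinder_def seq_prefix_def)

lemma self_mem_cylinder_seq_prefix [simp]: "p \<in> cylinder (seq_prefix p K)"
  by (simp add: mem_cylinder_seq_prefix)

lemma cylinder_seq_prefix_antimono: "K \<le> K' \<Longrightarrow> cylinder (seq_prefix p K') \<subseteq> cylinder (seq_prefix p K)"
  by (auto simp: mem_cylinder_seq_prefix)

lemma cylinder_Nil [simp]: "cylinder [] = UNIV"
  by (simp add: cylinder_def)

lemma cylinder_antimono:
  assumes "take (length s) t = s"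
  shows "cylinder t \<subseteq> cylinder s"
proof
  fix p assume p: "p \<in> cylinder t"
  have "p k = s ! k" if "k < length s" for k
  proof -
    have "k < length t" using that assms by (metis length_take min.strict_boundedE)
    then have "p k = t ! k" using p by (simp add: cylinder_def)
    also have "\<dots> = s ! k" using that by (subst assms[symmetric]) simp
    finally show ?thesis .
  qed
  then show "p \<in> cylinder s" by (simp add: cylinder_def)
qed

lemma take_seq_prefix:
  assumes "p \<in> cylinder s" "length s \<le> K"
  shows "take (length s) (seq_prefix p K) = s"
proof (rule nth_equalityI)
  fix k assume "k < length (take (length s) (seq_prefix p K))"
  then show "take (length s) (seq_prefix p K) ! k = s ! k"
    using assms by (simp add: seq_prefix_def cylinder_def)
qed (use assms in simp)

lemma topspace_baire_space [simp]: "topspace baire_space = UNIV"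
  by (simp add: baire_space_def)

lemma openin_baire_space_iff:
  "openin baire_space U \<longleftrightarrow> (\<forall>p\<in>U. \<exists>K. cylinder (seq_prefix p K) \<subseteq> U)"
proof
  assume "openin baire_space U"
  then have U: "\<forall>p\<in>U. \<exists>V. finite {i. V i \<noteq> UNIV} \<and> p \<in> Pi\<^sub>E UNIV V \<and> Pi\<^sub>E UNIV V \<subseteq> U"
    unfolding baire_space_def openin_product_topology_alt by simp
  show "\<forall>p\<in>U. \<exists>K. cylinder (seq_prefix p K) \<subseteq> U"
  proof
    fix p assume "p \<in> U"
    then obtain V where V: "finite {i. V i \<noteq> UNIV}" "p \<in> Pi\<^sub>E UNIV V" "Pi\<^sub>E UNIV V \<subseteq> U"
      using U by metis
    obtain K where "\<forall>i\<in>{i. V i \<noteq> UNIV}. i < K"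
      using finite_nat_bounded[OF V(1)] by auto
    then have "cylinder (seq_prefix p K) \<subseteq> Pi\<^sub>E UNIV V"
      using V(2) by (fastforce simp: mem_cylinder_seq_prefix PiE_iff)
    then show "\<exists>K. cylinder (seq_prefix p K) \<subseteq> U" using V(3) by blast
  qed
next
  assume U: "\<forall>p\<in>U. \<exists>K. cylinder (seq_prefix p K) \<subseteq> U"
  show "openin baire_space U"
    unfolding baire_space_def openin_product_topology_alt
  proof (intro ballI)
    fix p assume "p \<in> U"
    then obtain K where K: "cylinder (seq_prefix p K) \<subseteq> U" using U by blast
    define V where "V i = (if i < K then {p i} else UNIV)" for i
    have "{i. V i \<noteq> UNIV} \<subseteq> {..<K}" by (auto simp: V_def)
    then have "finite {i. V i \<noteq> UNIV}" using finite_subset by blast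
    moreover have "p \<in> Pi\<^sub>E UNIV V" by (auto simp: V_def)
    moreover have "Pi\<^sub>E UNIV V \<subseteq> U"
      using K by (force simp: V_def mem_cylinder_seq_prefix split: if_splits)
    ultimately show "\<exists>V. finite {i \<in> UNIV. V i \<noteq> topspace (discrete_topology UNIV)} \<and>
        (\<forall>i\<in>UNIV. openin (discrete_topology UNIV) (V i)) \<and> p \<in> Pi\<^sub>E UNIV V \<and> Pi\<^sub>E UNIV V \<subseteq> U"
      by auto
  qed
qed

lemma openin_cylinder: "openin baire_space (cylinder s)"
  unfolding openin_baire_space_iff
proof
  fix p assume "p \<in> cylinder s"
  then have "cylinder (seq_prefix p (length s)) \<subseteq> cylinder s"
    by (auto simp: cylinder_def seq_prefix_def)
  then show "\<exists>K. cylinder (seq_prefix p K) \<subseteq> cylinder s" by blast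
qed

lemma openin_subtopology_baire_space_iff:
  "openin (subtopology baire_space F) V \<longleftrightarrow>
     V \<subseteq> F \<and> (\<forall>p\<in>V. \<exists>K. cylinder (seq_prefix p K) \<inter> F \<subseteq> V)"
proof
  assume "openin (subtopology baire_space F) V"
  then obtain U where "openin baire_space U" "V = U \<inter> F" by (auto simp: openin_subtopology)
  then show "V \<subseteq> F \<and> (\<forall>p\<in>V. \<exists>K. cylinder (seq_prefix p K) \<inter> F \<subseteq> V)"
    unfolding openin_baire_space_iff by blast
next
  assume V: "V \<subseteq> F \<and> (\<forall>p\<in>V. \<exists>K. cylinder (seq_prefix p K) \<inter> F \<subseteq> V)"
  then obtain K where K: "\<And>p. p \<in> V \<Longrightarrow> cylinder (seq_prefix p (K p)) \<inter> F \<subseteq> V" by metis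
  define U where "U = (\<Union>p\<in>V. cylinder (seq_prefix p (K p)))"
  have "openin baire_space U" unfolding U_def by (auto intro: openin_cylinder)
  moreover have "V = U \<inter> F" using V K unfolding U_def by force
  ultimately show "openin (subtopology baire_space F) V"
    by (auto simp: openin_subtopology)
qed

lemma continuous_map_from_baire_space_iff:
  "continuous_map (subtopology baire_space F) X f \<longleftrightarrow>
     f ` F \<subseteq> topspace X \<and>
     (\<forall>U. openin X U \<longrightarrow> (\<forall>p\<in>F. f p \<in> U \<longrightarrow> (\<exists>K. \<forall>q\<in>cylinder (seq_prefix p K) \<inter> F. f q \<in> U)))"
proof -
  have "openin (subtopology baire_space F) {p \<in> F. f p \<in> U} \<longleftrightarrow>
      (\<forall>p\<in>F. f p \<in> U \<longrightarrow> (\<exists>K. \<forall>q\<in>cylinder (seq_prefix p K) \<inter> F. f q \<in> U))" for U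
    unfolding openin_subtopology_baire_space_iff by blast
  then show ?thesis
    unfolding continuous_map_def by (auto simp: Pi_iff)
qed

lemma continuous_map_to_discrete_nat_iff:
  "continuous_map (subtopology baire_space F) (discrete_topology UNIV) h \<longleftrightarrow>
     (\<forall>p\<in>F. \<exists>K. \<forall>q\<in>cylinder (seq_prefix p K) \<inter> F. h q = (h p :: nat))"
proof -
  have "(\<forall>U. \<forall>p\<in>F. h p \<in> U \<longrightarrow> (\<exists>K. \<forall>q\<in>cylinder (seq_prefix p K) \<inter> F. h q \<in> U)) \<longleftrightarrow>
      (\<forall>p\<in>F. \<exists>K. \<forall>q\<in>cylinder (seq_prefix p K) \<inter> F. h q = h p)"
  proof (intro iffI allI ballI impI)
    fix p assume "\<forall>U. \<forall>p\<in>F. h p \<in> U \<longrightarrow> (\<exists>K. \<forall>q\<in>cylinder (seq_prefix p K) \<inter> F. h q \<in> U)"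
      and "p \<in> F"
    then obtain K where "\<forall>q\<in>cylinder (seq_prefix p K) \<inter> F. h q \<in> {h p}" by blast
    then show "\<exists>K. \<forall>q\<in>cylinder (seq_prefix p K) \<inter> F. h q = h p" by blast
  next
    fix U p assume "\<forall>p\<in>F. \<exists>K. \<forall>q\<in>cylinder (seq_prefix p K) \<inter> F. h q = h p"
      and "p \<in> F" "h p \<in> U"
    then show "\<exists>K. \<forall>q\<in>cylinder (seq_prefix p K) \<inter> F. h q \<in> U" by metis
  qed
  then show ?thesis
    unfolding continuous_map_from_baire_space_iff by simp
qed

lemma continuous_map_to_baire_space_iff:
  "continuous_map (subtopology baire_space F) baire_space g \<longleftrightarrow>
     (\<forall>p\<in>F. \<forall>k. \<exists>K. \<forall>q\<in>cylinder (seq_prefix p K) \<inter> F. g q k = g p k)"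
proof -
  have "continuous_map Y baire_space g \<longleftrightarrow> (\<forall>k. continuous_map Y (discrete_topology UNIV) (\<lambda>p. g p k))"
    for Y :: "(nat \<Rightarrow> nat) topology"
    by (simp add: baire_space_def continuous_map_componentwise_UNIV)
  then show ?thesis
    by (simp only: continuous_map_to_discrete_nat_iff) blast
qed

lemma completely_metrizable_baire_space: "completely_metrizable_space baire_space"
  unfolding baire_space_def
  by (simp add: completely_metrizable_space_product_topology completely_metrizable_space_discrete_topology)

lemma second_countable_baire_space: "second_countable baire_space"
  unfolding second_countable_def
proof (intro exI conjI)
  show "countable (range cylinder)" by simp
  show "\<forall>V\<in>range cylinder. openin baire_space V" using openin_cylinder by auto
  show "\<forall>U p. openin baire_space U \<and> p \<in> U \<longrightarrow> (\<exists>V\<in>range cylinder. p \<in> V \<and> V \<subseteq> U)"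
    unfolding openin_baire_space_iff using self_mem_cylinder_seq_prefix by blast
qed

lemma Polish_subspace_baire_space_iff_gdelta:
  "Polish_space (subtopology baire_space D) \<longleftrightarrow> gdelta_in baire_space D"
proof
  assume "Polish_space (subtopology baire_space D)"
  then show "gdelta_in baire_space D"
    unfolding Polish_space_def
    by (intro completely_metrizable_space_imp_gdelta_in
        completely_metrizable_imp_metrizable_space[OF completely_metrizable_baire_space]) auto
next
  assume "gdelta_in baire_space D"
  then show "Polish_space (subtopology baire_space D)"
    unfolding Polish_space_def
    using completely_metrizable_space_gdelta_in[OF completely_metrizable_baire_space]
      second_countable_imp_separable_space[OF second_countable_subtopology[OF second_countable_baire_space]]
    by blast
qed

definition dense_seq :: "nat \<Rightarrow> nat \<Rightarrow> nat" where
  "dense_seq j = (\<lambda>i. if i < length (from_nat j :: nat list) then (from_nat j :: nat list) ! i else 0)"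

lemma dense_seq_mem_cylinder: "dense_seq (to_nat s) \<in> cylinder s"
  by (simp add: dense_seq_def cylinder_def)

lemma continuous_maps_baire_space_eqI:
  assumes g: "continuous_map baire_space baire_space g"
    and h: "continuous_map baire_space baire_space h"
    and eq: "\<And>j. g (dense_seq j) = h (dense_seq j)"
  shows "g = h"
proof (intro ext)
  fix p i
  obtain K1 where K1: "\<forall>q\<in>cylinder (seq_prefix p K1). g q i = g p i"
    using g unfolding continuous_map_to_baire_space_iff[of UNIV, simplified] by blast
  obtain K2 where K2: "\<forall>q\<in>cylinder (seq_prefix p K2). h q i = h p i"
    using h unfolding continuous_map_to_baire_space_iff[of UNIV, simplified] by blast
  define q where "q = dense_seq (to_nat (seq_prefix p (max K1 K2)))"
  have "q \<in> cylinder (seq_prefix p (max K1 K2))"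
    unfolding q_def by (rule dense_seq_mem_cylinder)
  then have "q \<in> cylinder (seq_prefix p K1)" "q \<in> cylinder (seq_prefix p K2)"
    using cylinder_seq_prefix_antimono[of _ "max K1 K2" p] by (meson max.cobounded1 max.cobounded2 subsetD)+
  then show "g p i = h p i"
    using K1 K2 eq[of "to_nat (seq_prefix p (max K1 K2))"] unfolding q_def by metis
qed

lemma limit_of_prefix_chain:
  assumes take: "\<And>k. take (length (t k)) (t (Suc k)) = t k"
    and length: "\<And>k. length (t k) < length (t (Suc k))"
  obtains p where "\<And>k. p \<in> cylinder (t k)" "\<And>K. cylinder (t K) \<subseteq> cylinder (seq_prefix p K)"
proof -
  have antimono: "cylinder (t m) \<subseteq> cylinder (t k)" if "k \<le> m" for k m
    using lift_Suc_antimono_le[of "\<lambda>k. cylinder (t k)", OF cylinder_antimono[OF take] that] .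
  have long: "k \<le> length (t k)" for k
  proof (induction k)
    case (Suc k)
    then show ?case using length[of k] by simp
  qed simp
  define p where "p i = t (Suc i) ! i" for i
  have p: "p \<in> cylinder (t k)" for k
  proof -
    have "p i = t k ! i" if "i < length (t k)" for i
    proof -
      define q where "q = dense_seq (to_nat (t (max k (Suc i))))"
      have "q \<in> cylinder (t k)" "q \<in> cylinder (t (Suc i))"
        using antimono dense_seq_mem_cylinder unfolding q_def by (meson max.cobounded1 max.cobounded2 subsetD)+
      then have "q i = t k ! i" "q i = t (Suc i) ! i"
        using that long[of "Suc i"] by (auto simp: cylinder_def)
      then show ?thesis by (simp add: p_def)
    qed
    then show ?thesis by (simp add: cylinder_def)
  qed
  moreover have "cylinder (t K) \<subseteq> cylinder (seq_prefix p K)" for K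
  proof
    fix q assume "q \<in> cylinder (t K)"
    then show "q \<in> cylinder (seq_prefix p K)"
      unfolding mem_cylinder_seq_prefix using p[of K] long[of K] by (auto simp: cylinder_def)
  qed
  ultimately show thesis using that[of p] by blast
qed

lemma gdelta_in_obtain_open_seq:
  assumes "gdelta_in X D"
  obtains U :: "nat \<Rightarrow> 'a set" where "\<And>k. openin X (U k)" "D = \<Inter> (range U)"
proof -
  obtain \<U> where \<U>: "countable \<U>" "\<forall>U\<in>\<U>. openin X U" "\<Inter>\<U> \<inter> topspace X = D"
    using assms unfolding gdelta_in_alt intersection_of_def by auto
  define U where "U = from_nat_into (insert (topspace X) \<U>)"
  have "range U = insert (topspace X) \<U>" using \<U>(1) by (simp add: U_def)
  have "openin X (U k)" for k
  proof -
    have "U k \<in> insert (topspace X) \<U>"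
      unfolding \<open>range U = insert (topspace X) \<U>\<close>[symmetric] by simp
    then show ?thesis using \<U>(2) by auto
  qed
  moreover have "D = \<Inter> (range U)"
    using \<open>range U = insert (topspace X) \<U>\<close> \<U>(3) by auto
  ultimately show thesis using that[of U] by blast
qed

section \<open>Neighbourhood codes and the standard representation\<close>

definition enum_base :: "'a topology \<Rightarrow> (nat \<Rightarrow> 'a set) \<Rightarrow> bool" where
  "enum_base X B \<longleftrightarrow>
     (\<forall>n. openin X (B n)) \<and> (\<forall>U x. openin X U \<and> x \<in> U \<longrightarrow> (\<exists>n. x \<in> B n \<and> B n \<subseteq> U))"

lemma enum_base_openin: "enum_base X B \<Longrightarrow> openin X (B n)"
  by (simp add: enum_base_def)

lemma enum_baseD: "enum_base X B \<Longrightarrow> openin X U \<Longrightarrow> x \<in> U \<Longrightarrow> \<exists>n. x \<in> B n \<and> B n \<subseteq> U"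
  by (simp add: enum_base_def)

lemma enum_base_subset_topspace: "enum_base X B \<Longrightarrow> B n \<subseteq> topspace X"
  by (simp add: enum_base_openin openin_subset)

lemma second_countable_imp_enum_base:
  assumes "second_countable X"
  obtains B where "enum_base X B"
proof -
  obtain \<B> where \<B>: "countable \<B>" "\<forall>V\<in>\<B>. openin X V"
    "\<forall>U x. openin X U \<and> x \<in> U \<longrightarrow> (\<exists>V\<in>\<B>. x \<in> V \<and> V \<subseteq> U)"
    using assms unfolding second_countable_def by blast
  \<comment> \<open>adding the empty set makes the base nonempty, so that it can be enumerated\<close>
  have range: "range (from_nat_into (insert {} \<B>)) = insert {} \<B>"
    using \<B>(1) by (simp add: range_from_nat_into)
  have "enum_base X (from_nat_into (insert {} \<B>))"
    unfolding enum_base_def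
  proof (intro conjI allI impI)
    fix n show "openin X (from_nat_into (insert {} \<B>) n)"
      using \<B>(2) range by (metis insert_iff openin_empty rangeI)
  next
    fix U x assume "openin X U \<and> x \<in> U"
    then obtain V where "V \<in> \<B>" "x \<in> V" "V \<subseteq> U" using \<B>(3) by blast
    then show "\<exists>n. x \<in> from_nat_into (insert {} \<B>) n \<and> from_nat_into (insert {} \<B>) n \<subseteq> U"
      using range by (metis insertCI rangeE)
  qed
  then show thesis using that by blast
qed

definition nbhd_codes :: "(nat \<Rightarrow> 'a set) \<Rightarrow> 'a \<Rightarrow> nat set" where
  "nbhd_codes B x = {n. x \<in> B n}"

lemma nbhd_codes_nonempty: "enum_base X B \<Longrightarrow> x \<in> topspace X \<Longrightarrow> nbhd_codes B x \<noteq> {}"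
  using enum_baseD[of X B "topspace X" x] by (auto simp: nbhd_codes_def)

text \<open>A sequence \<open>p\<close> codes the set of all \<open>n\<close> with \<open>Suc n\<close> among its values;
  the value \<open>0\<close> carries no information, so that also finite sets have codes.\<close>

definition coded_set :: "(nat \<Rightarrow> nat) \<Rightarrow> nat set" where
  "coded_set p = {n. \<exists>k. p k = Suc n}"

definition coded_set_upto :: "(nat \<Rightarrow> nat) \<Rightarrow> nat \<Rightarrow> nat set" where
  "coded_set_upto p K = {n. \<exists>k<K. p k = Suc n}"

lemma coded_set_upto_subset: "coded_set_upto p K \<subseteq> coded_set p"
  by (auto simp: coded_set_upto_def coded_set_def)

lemma coded_set_upto_mono: "K \<le> K' \<Longrightarrow> coded_set_upto p K \<subseteq> coded_set_upto p K'"
  unfolding coded_set_upto_def using less_le_trans by blast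

lemma finite_coded_set_upto: "finite (coded_set_upto p K)"
proof -
  have "coded_set_upto p K \<subseteq> (\<lambda>k. p k - 1) ` {..<K}" by (force simp: coded_set_upto_def)
  then show ?thesis by (rule finite_subset) simp
qed

lemma finite_subset_coded_set_upto:
  assumes "finite S" "S \<subseteq> coded_set p"
  obtains K where "S \<subseteq> coded_set_upto p K"
  using assms
proof (induction S arbitrary: thesis rule: finite_induct)
  case (insert n S)
  obtain K where K: "S \<subseteq> coded_set_upto p K" using insert by auto
  obtain k where k: "p k = Suc n" using insert.prems by (auto simp: coded_set_def)
  have "S \<subseteq> coded_set_upto p (max K (Suc k))"
    using K coded_set_upto_mono[of K "max K (Suc k)" p] by auto
  moreover have "n \<in> coded_set_upto p (max K (Suc k))"
    using k unfolding coded_set_upto_def by (intro CollectI exI[of _ k]) simp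
  ultimately show ?case using insert.prems(1) by blast
qed simp

lemma coded_set_upto_cylinder: "q \<in> cylinder (seq_prefix p K) \<Longrightarrow> coded_set_upto q K = coded_set_upto p K"
  by (auto simp: coded_set_upto_def mem_cylinder_seq_prefix)

lemma coded_set_splice:
  "coded_set (\<lambda>k. if k < K then q k else r (k - K)) = coded_set_upto q K \<union> coded_set r"
proof (intro set_eqI iffI)
  fix n assume "n \<in> coded_set (\<lambda>k. if k < K then q k else r (k - K))"
  then obtain k where "(if k < K then q k else r (k - K)) = Suc n" by (auto simp: coded_set_def)
  then show "n \<in> coded_set_upto q K \<union> coded_set r"
    by (cases "k < K") (auto simp: coded_set_upto_def coded_set_def)
next
  fix n assume "n \<in> coded_set_upto q K \<union> coded_set r"
  then show "n \<in> coded_set (\<lambda>k. if k < K then q k else r (k - K))"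
  proof
    assume "n \<in> coded_set_upto q K"
    then obtain k where "k < K" "q k = Suc n" by (auto simp: coded_set_upto_def)
    then show ?thesis unfolding coded_set_def by (intro CollectI exI[of _ k]) simp
  next
    assume "n \<in> coded_set r"
    then obtain k where "r k = Suc n" by (auto simp: coded_set_def)
    then show ?thesis unfolding coded_set_def by (intro CollectI exI[of _ "k + K"]) simp
  qed
qed

definition std_name :: "(nat \<Rightarrow> 'a set) \<Rightarrow> 'a \<Rightarrow> nat \<Rightarrow> nat" where
  "std_name B x = (\<lambda>k. if x \<in> B k then Suc k else 0)"

lemma coded_set_std_name [simp]: "coded_set (std_name B x) = nbhd_codes B x"
  by (auto simp: coded_set_def std_name_def nbhd_codes_def split: if_splits)

definition std_dom :: "'a topology \<Rightarrow> (nat \<Rightarrow> 'a set) \<Rightarrow> (nat \<Rightarrow> nat) set" where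
  "std_dom X B = {p. \<exists>x\<in>topspace X. coded_set p = nbhd_codes B x}"

definition std_rep :: "'a topology \<Rightarrow> (nat \<Rightarrow> 'a set) \<Rightarrow> (nat \<Rightarrow> nat) \<Rightarrow> 'a" where
  "std_rep X B p = (THE x. x \<in> topspace X \<and> nbhd_codes B x = coded_set p)"

lemma std_name_in_std_dom: "x \<in> topspace X \<Longrightarrow> std_name B x \<in> std_dom X B"
  by (auto simp: std_dom_def)

context
  fixes X :: "'a topology" and B :: "nat \<Rightarrow> 'a set"
  assumes T0: "inj_on (nbhd_codes B) (topspace X)"
begin

lemma std_rep_eq:
  assumes "x \<in> topspace X" "coded_set p = nbhd_codes B x"
  shows "std_rep X B p = x"
  unfolding std_rep_def using assms T0 by (intro the_equality) (auto dest: inj_onD)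

lemma std_rep:
  assumes "p \<in> std_dom X B"
  shows "std_rep X B p \<in> topspace X" "nbhd_codes B (std_rep X B p) = coded_set p"
  using assms std_rep_eq by (auto simp: std_dom_def)

lemma std_rep_std_name: "x \<in> topspace X \<Longrightarrow> std_rep X B (std_name B x) = x"
  by (simp add: std_rep_eq)

lemma continuous_map_std_rep:
  assumes B: "enum_base X B"
  shows "continuous_map (subtopology baire_space (std_dom X B)) X (std_rep X B)"
  unfolding continuous_map_from_baire_space_iff
proof (intro conjI allI impI ballI)
  show "std_rep X B ` std_dom X B \<subseteq> topspace X" using std_rep by auto
next
  fix U p assume U: "openin X U" and p: "p \<in> std_dom X B" "std_rep X B p \<in> U"
  obtain n where n: "std_rep X B p \<in> B n" "B n \<subseteq> U" using enum_baseD[OF B U p(2)] by blast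
  then obtain k where k: "p k = Suc n"
    using std_rep(2)[OF p(1)] by (auto simp: nbhd_codes_def coded_set_def)
  have "std_rep X B q \<in> U" if q: "q \<in> cylinder (seq_prefix p (Suc k)) \<inter> std_dom X B" for q
  proof -
    have "q k = Suc n" using q k by (simp add: mem_cylinder_seq_prefix)
    then have "n \<in> coded_set q" by (auto simp: coded_set_def)
    then show ?thesis using std_rep(2) q n(2) by (auto simp: nbhd_codes_def)
  qed
  then show "\<exists>K. \<forall>q\<in>cylinder (seq_prefix p K) \<inter> std_dom X B. std_rep X B q \<in> U" by blast
qed

lemma std_rep_image_cylinder_nbhd:
  assumes B: "enum_base X B" and q: "q \<in> std_dom X B"
  obtains V where "openin X V" "std_rep X B q \<in> V"
    "V \<subseteq> std_rep X B ` (cylinder (seq_prefix q K) \<inter> std_dom X B)"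
proof -
  define V where "V = topspace X \<inter> \<Inter> (B ` coded_set_upto q K)"
  have "openin X V"
    unfolding V_def using finite_coded_set_upto enum_base_openin[OF B]
    by (intro openin_Int_Inter) auto
  moreover have "std_rep X B q \<in> V"
    using std_rep[OF q] coded_set_upto_subset[of q K] by (auto simp: V_def nbhd_codes_def)
  moreover have "V \<subseteq> std_rep X B ` (cylinder (seq_prefix q K) \<inter> std_dom X B)"
  proof
    fix z assume z: "z \<in> V"
    define q' where "q' = (\<lambda>k. if k < K then q k else std_name B z (k - K))"
    have "coded_set q' = nbhd_codes B z"
      using z coded_set_splice[of K q "std_name B z"] by (auto simp: q'_def V_def nbhd_codes_def)
    moreover have "z \<in> topspace X" using z by (simp add: V_def)
    moreover have "q' \<in> cylinder (seq_prefix q K)" by (simp add: mem_cylinder_seq_prefix q'_def)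
    ultimately show "z \<in> std_rep X B ` (cylinder (seq_prefix q K) \<inter> std_dom X B)"
      using std_rep_eq by (auto simp: std_dom_def intro!: image_eqI[of z _ q'])
  qed
  ultimately show thesis using that by blast
qed

end

lemma admissible_rep_std_rep:
  assumes B: "enum_base X B" and T0: "inj_on (nbhd_codes B) (topspace X)"
  shows "admissible_rep X (std_dom X B) (std_rep X B)"
  unfolding admissible_rep_def
proof (intro conjI allI impI)
  show "continuous_map (subtopology baire_space (std_dom X B)) X (std_rep X B)"
    using continuous_map_std_rep[OF T0 B] .
next
  fix F :: "(nat \<Rightarrow> nat) set" and f
  assume f: "continuous_map (subtopology baire_space F) X f"
  \<comment> \<open>\<open>g p\<close> lists each \<open>n\<close> such that \<open>f\<close> maps some cylinder around \<open>p\<close> into \<open>B n\<close>\<close>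
  define g where "g p k = (case (from_nat k :: nat \<times> nat list) of (n, s) \<Rightarrow>
      if p \<in> cylinder s \<and> (\<forall>q\<in>cylinder s \<inter> F. f q \<in> B n) then Suc n else 0)" for p k
  have "continuous_map (subtopology baire_space F) baire_space g"
    unfolding continuous_map_to_baire_space_iff
  proof (intro ballI allI)
    fix p k
    obtain n s where ns: "(from_nat k :: nat \<times> nat list) = (n, s)" by fastforce
    have "g q k = g p k" if "q \<in> cylinder (seq_prefix p (length s)) \<inter> F" for q
    proof -
      have "q \<in> cylinder s \<longleftrightarrow> p \<in> cylinder s"
        using that by (auto simp: cylinder_def seq_prefix_def)
      then show ?thesis by (simp add: g_def ns)
    qed
    then show "\<exists>K. \<forall>q\<in>cylinder (seq_prefix p K) \<inter> F. g q k = g p k" by blast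
  qed
  moreover have fX: "f p \<in> topspace X" if "p \<in> F" for p
    using f that unfolding continuous_map_from_baire_space_iff by auto
  moreover have coded_g: "coded_set (g p) = nbhd_codes B (f p)" if p: "p \<in> F" for p
  proof (intro set_eqI iffI)
    fix n assume "n \<in> coded_set (g p)"
    then obtain k where gk: "g p k = Suc n" by (auto simp: coded_set_def)
    obtain n' s where ns: "(from_nat k :: nat \<times> nat list) = (n', s)" by fastforce
    with gk have "n' = n" "p \<in> cylinder s" "\<forall>q\<in>cylinder s \<inter> F. f q \<in> B n'"
      by (auto simp: g_def split: if_splits)
    then show "n \<in> nbhd_codes B (f p)" using p by (auto simp: nbhd_codes_def)
  next
    fix n assume "n \<in> nbhd_codes B (f p)"
    then obtain K where K: "\<forall>q\<in>cylinder (seq_prefix p K) \<inter> F. f q \<in> B n"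
      using f p enum_base_openin[OF B] unfolding continuous_map_from_baire_space_iff nbhd_codes_def
      by blast
    then have "g p (to_nat (n, seq_prefix p K)) = Suc n" by (simp add: g_def)
    then show "n \<in> coded_set (g p)" by (auto simp: coded_set_def)
  qed
  moreover have "F = {p \<in> F. g p \<in> std_dom X B}"
    using coded_g fX by (auto simp: std_dom_def)
  moreover have "\<forall>p\<in>F. f p = std_rep X B (g p)"
    using std_rep_eq[OF T0 fX coded_g] by simp
  ultimately show "\<exists>E g. continuous_map (subtopology baire_space E) baire_space g \<and>
      F = {p \<in> E. g p \<in> std_dom X B} \<and> (\<forall>p\<in>F. f p = std_rep X B (g p))"
    by blast
qed

text \<open>If \<open>x \<noteq> y\<close> were topologically indistinguishable, every map from Baire space into \<open>{x, y}\<close>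
  would be continuous; factoring these \<open>2^\<frak>c\<close> maps through \<open>\<rho>\<close> would inject them into the
  continuous self-maps of Baire space, which are determined by their values on a countable set.\<close>

lemma inj_on_nbhd_codes_if_admissible_rep:
  assumes adm: "admissible_rep X D \<rho>" and B: "enum_base X B"
  shows "inj_on (nbhd_codes B) (topspace X)"
proof (rule inj_onI, rule ccontr)
  fix x y assume x: "x \<in> topspace X" and y: "y \<in> topspace X"
    and same: "nbhd_codes B x = nbhd_codes B y" and "x \<noteq> y"
  have indist: "x \<in> U \<longleftrightarrow> y \<in> U" if U: "openin X U" for U
    using enum_baseD[OF B U] same unfolding nbhd_codes_def by blast
  define f where "f S p = (if p \<in> S then x else y)" for S :: "(nat \<Rightarrow> nat) set" and p
  have "continuous_map baire_space X (f S)" for S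
    unfolding continuous_map_from_baire_space_iff[of UNIV X "f S", simplified]
  proof (intro conjI allI impI ballI)
    show "range (f S) \<subseteq> topspace X" using x y by (auto simp: f_def)
    fix U p assume "openin X U" "f S p \<in> U"
    then have "x \<in> U" "y \<in> U" using indist[of U] by (auto simp: f_def split: if_splits)
    then have "\<forall>q. f S q \<in> U" by (simp add: f_def)
    then show "\<exists>K. \<forall>q\<in>cylinder (seq_prefix p K). f S q \<in> U" by blast
  qed
  then have "\<exists>g. continuous_map baire_space baire_space g \<and> (\<forall>p. f S p = \<rho> (g p))" for S
  proof -
    have "continuous_map (subtopology baire_space UNIV) X (f S)"
      using \<open>continuous_map baire_space X (f S)\<close> by simp
    then obtain E g where "continuous_map (subtopology baire_space E) baire_space g"
      "UNIV = {p \<in> E. g p \<in> D}" "\<forall>p\<in>UNIV. f S p = \<rho> (g p)"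
      using adm unfolding admissible_rep_def by blast
    moreover from this(2) have "E = UNIV" by blast
    ultimately show ?thesis by auto
  qed
  then obtain G where G: "\<And>S. continuous_map baire_space baire_space (G S)"
    "\<And>S p. f S p = \<rho> (G S p)"
    by metis
  have S_eq: "S = {p. \<rho> (G S p) = x}" for S
    using G(2)[of S, symmetric] \<open>x \<noteq> y\<close> by (auto simp: f_def)
  define \<Phi> where "\<Phi> S = (\<lambda>k. G S (dense_seq (fst (prod_decode k))) (snd (prod_decode k)))" for S
  have "inj \<Phi>"
  proof (rule injI)
    fix S1 S2 assume eq: "\<Phi> S1 = \<Phi> S2"
    have "G S1 (dense_seq j) i = G S2 (dense_seq j) i" for j i
      using fun_cong[OF eq, of "prod_encode (j, i)"] by (simp add: \<Phi>_def)
    then have "G S1 = G S2"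
      using continuous_maps_baire_space_eqI[OF G(1) G(1)] by blast
    then show "S1 = S2" using S_eq[of S1] S_eq[of S2] by simp
  qed
  then have "surj (inv \<Phi>)" by (rule inj_imp_surj_inv)
  then have "inv \<Phi> ` UNIV = Pow UNIV" by simp
  then show False using Cantors_theorem by blast
qed

section \<open>\<open>\<Pi>\<^sup>0\<^sub>2\<close> presentations of the neighbourhood codes\<close>

text \<open>Each set \<open>{A. F i \<subseteq> A \<longrightarrow> (\<exists>j\<in>A. J i j)}\<close> with \<open>F i\<close> finite is the union of a
  Scott-closed and a Scott-open subset of \<open>\<P>(\<omega>)\<close>, so a presentation exhibits the set of codes
  of points of \<open>X\<close> as a \<open>\<Pi>\<^sup>0\<^sub>2\<close> subset of \<open>\<P>(\<omega>)\<close>.\<close>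

definition pi02_presentation ::
    "'a topology \<Rightarrow> (nat \<Rightarrow> 'a set) \<Rightarrow> ('i \<Rightarrow> nat set) \<Rightarrow> ('i \<Rightarrow> nat \<Rightarrow> bool) \<Rightarrow> bool" where
  "pi02_presentation X B F J \<longleftrightarrow> (\<forall>i. finite (F i)) \<and>
     (\<forall>A. (\<exists>x\<in>topspace X. A = nbhd_codes B x) \<longleftrightarrow> (\<forall>i. F i \<subseteq> A \<longrightarrow> (\<exists>j\<in>A. J i j)))"

lemma pi02_presentationI:
  assumes "\<And>i. finite (F i)"
    and "\<And>x i. x \<in> topspace X \<Longrightarrow> F i \<subseteq> nbhd_codes B x \<Longrightarrow> \<exists>j\<in>nbhd_codes B x. J i j"
    and "\<And>A. \<forall>i. F i \<subseteq> A \<longrightarrow> (\<exists>j\<in>A. J i j) \<Longrightarrow> \<exists>x\<in>topspace X. A = nbhd_codes B x"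
  shows "pi02_presentation X B F J"
  unfolding pi02_presentation_def using assms by blast

lemma openin_coded_condition:
  "openin baire_space {p. \<not> F \<subseteq> coded_set_upto p K \<or> (\<exists>j\<in>coded_set p. W j)}" (is "openin _ ?C")
  unfolding openin_baire_space_iff
proof
  fix p assume "p \<in> ?C"
  then consider "\<not> F \<subseteq> coded_set_upto p K" | j k where "W j" "p k = Suc j"
    unfolding coded_set_def by blast
  then show "\<exists>K'. cylinder (seq_prefix p K') \<subseteq> ?C"
  proof cases
    case 1
    then have "cylinder (seq_prefix p K) \<subseteq> ?C" using coded_set_upto_cylinder by auto
    then show ?thesis by blast
  next
    case (2 j k)
    have "cylinder (seq_prefix p (Suc k)) \<subseteq> ?C"
    proof
      fix q assume "q \<in> cylinder (seq_prefix p (Suc k))"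
      then have "q k = Suc j" using 2 by (simp add: mem_cylinder_seq_prefix)
      then show "q \<in> ?C" using 2 by (auto simp: coded_set_def)
    qed
    then show ?thesis by blast
  qed
qed

lemma gdelta_in_std_dom:
  fixes F :: "'i::countable \<Rightarrow> nat set"
  assumes pres: "pi02_presentation X B F J"
  shows "gdelta_in baire_space (std_dom X B)"
proof -
  define Op where "Op = (\<lambda>(i, K). {p. \<not> F i \<subseteq> coded_set_upto p K \<or> (\<exists>j\<in>coded_set p. J i j)})"
  have fin: "finite (F i)" for i using pres by (simp add: pi02_presentation_def)
  have "std_dom X B = \<Inter> (range Op)"
  proof (intro set_eqI iffI)
    fix p assume "p \<in> std_dom X B"
    then have "\<forall>i. F i \<subseteq> coded_set p \<longrightarrow> (\<exists>j\<in>coded_set p. J i j)"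
      using pres unfolding std_dom_def pi02_presentation_def by blast
    then show "p \<in> \<Inter> (range Op)"
      using coded_set_upto_subset by (fastforce simp: Op_def)
  next
    fix p assume p: "p \<in> \<Inter> (range Op)"
    have "\<exists>j\<in>coded_set p. J i j" if Fi: "F i \<subseteq> coded_set p" for i
    proof -
      obtain K where "F i \<subseteq> coded_set_upto p K"
        using finite_subset_coded_set_upto[OF fin Fi] by blast
      moreover have "p \<in> Op (i, K)" using p by blast
      ultimately show ?thesis by (simp add: Op_def)
    qed
    then show "p \<in> std_dom X B"
      using pres unfolding std_dom_def pi02_presentation_def by (simp add: eq_commute)
  qed
  moreover have "openin baire_space (Op (i, K))" for i K
    using openin_coded_condition[of "F i" K "J i"] by (simp add: Op_def)
  ultimately show ?thesis
    unfolding gdelta_in_alt intersection_of_def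
    by (intro conjI exI[of _ "range Op"]) (auto intro: countable_image)
qed

text \<open>Every presentation below contains the conditions \<open>Some (n, m)\<close>, saying that codes are
  upward closed along \<open>B n \<subseteq> B m\<close>, and \<open>None\<close>, saying that they are nonempty.\<close>

definition base_conditions :: "(nat \<Rightarrow> 'a set) \<Rightarrow> (nat \<times> nat) option \<Rightarrow> nat set" where
  "base_conditions B c = (case c of Some (n, m) \<Rightarrow> if B n \<subseteq> B m then {n} else {} | None \<Rightarrow> {})"

definition base_witness :: "(nat \<Rightarrow> 'a set) \<Rightarrow> (nat \<times> nat) option \<Rightarrow> nat \<Rightarrow> bool" where
  "base_witness B c j = (case c of Some (n, m) \<Rightarrow> \<not> B n \<subseteq> B m \<or> j = m | None \<Rightarrow> True)"

definition upclosed_codes :: "(nat \<Rightarrow> 'a set) \<Rightarrow> nat set \<Rightarrow> bool" where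
  "upclosed_codes B A \<longleftrightarrow> (\<forall>n m. n \<in> A \<longrightarrow> B n \<subseteq> B m \<longrightarrow> m \<in> A)"

lemma pi02_presentation_with_base_conditions:
  fixes F :: "'i \<Rightarrow> nat set"
  assumes B: "enum_base X B" and fin: "\<And>i. finite (F i)"
    and holds: "\<And>x i. x \<in> topspace X \<Longrightarrow> F i \<subseteq> nbhd_codes B x \<Longrightarrow> \<exists>j\<in>nbhd_codes B x. J i j"
    and complete: "\<And>A. A \<noteq> {} \<Longrightarrow> upclosed_codes B A \<Longrightarrow> \<forall>i. F i \<subseteq> A \<longrightarrow> (\<exists>j\<in>A. J i j) \<Longrightarrow>
      \<exists>x\<in>topspace X. A = nbhd_codes B x"
  shows "pi02_presentation X B (case_sum (base_conditions B) F) (case_sum (base_witness B) J)"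
proof (rule pi02_presentationI)
  fix i show "finite (case_sum (base_conditions B) F i)"
    using fin by (auto simp: base_conditions_def split: sum.splits option.splits)
next
  fix x i assume x: "x \<in> topspace X"
    and Fi: "case_sum (base_conditions B) F i \<subseteq> nbhd_codes B x"
  show "\<exists>j\<in>nbhd_codes B x. case_sum (base_witness B) J i j"
  proof (cases i)
    case (Inl c)
    then show ?thesis
      using Fi nbhd_codes_nonempty[OF B x]
      by (auto simp: base_conditions_def base_witness_def nbhd_codes_def split: option.splits if_splits)
  qed (use holds x Fi in auto)
next
  fix A assume A: "\<forall>i. case_sum (base_conditions B) F i \<subseteq> A \<longrightarrow> (\<exists>j\<in>A. case_sum (base_witness B) J i j)"
  have "A \<noteq> {}" using A[rule_format, of "Inl None"] by (auto simp: base_conditions_def)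
  moreover have "upclosed_codes B A"
    unfolding upclosed_codes_def
  proof (intro allI impI)
    fix n m assume "n \<in> A" "B n \<subseteq> B m"
    then show "m \<in> A"
      using A[rule_format, of "Inl (Some (n, m))"] by (auto simp: base_conditions_def base_witness_def)
  qed
  moreover have "\<forall>i. F i \<subseteq> A \<longrightarrow> (\<exists>j\<in>A. J i j)" using A[rule_format, of "Inr _"] by auto
  ultimately show "\<exists>x\<in>topspace X. A = nbhd_codes B x" by (rule complete)
qed

section \<open>Topologies of quasi-metrics\<close>

lemma openin_qball: "x \<in> S \<Longrightarrow> e > 0 \<Longrightarrow> openin (qtopology S d) (qball S d x e)"
  unfolding qtopology_def by (rule topology_generated_by_Basis) blast

lemma qball_subset: "qball S d x e \<subseteq> S"
  by (auto simp: qball_def)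

lemma qball_mono: "e \<le> e' \<Longrightarrow> qball S d x e \<subseteq> qball S d x e'"
  by (auto simp: qball_def)

locale quasi_pseudometric =
  fixes S :: "'a set" and d :: "'a \<Rightarrow> 'a \<Rightarrow> real"
  assumes self: "x \<in> S \<Longrightarrow> d x x = 0"
    and triangle: "x \<in> S \<Longrightarrow> y \<in> S \<Longrightarrow> z \<in> S \<Longrightarrow> d x z \<le> d x y + d y z"
begin

lemma centre_mem_qball: "x \<in> S \<Longrightarrow> e > 0 \<Longrightarrow> x \<in> qball S d x e"
  using self by (simp add: qball_def)

lemma topspace_qtopology [simp]: "topspace (qtopology S d) = S"
proof -
  have "\<Union> {qball S d x e |x e. x \<in> S \<and> 0 < e} = S"
  proof
    show "\<Union> {qball S d x e |x e. x \<in> S \<and> 0 < e} \<subseteq> S"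
      by (rule Union_least) (auto simp: qball_def)
    show "S \<subseteq> \<Union> {qball S d x e |x e. x \<in> S \<and> 0 < e}"
    proof
      fix x assume "x \<in> S"
      then have "qball S d x 1 \<in> {qball S d x e |x e. x \<in> S \<and> 0 < e}"
        by (intro CollectI exI[of _ x] exI[of _ "1::real"]) simp
      then show "x \<in> \<Union> {qball S d x e |x e. x \<in> S \<and> 0 < e}"
        using centre_mem_qball[OF \<open>x \<in> S\<close> zero_less_one] by blast
    qed
  qed
  then show ?thesis unfolding qtopology_def topology_generated_by_topspace .
qed

lemma openin_qtopology_imp_qball_subset:
  assumes "openin (qtopology S d) U" "x \<in> U"
  shows "\<exists>e>0. qball S d x e \<subseteq> U"
proof -
  have "generate_topology_on {qball S d x e | x e. x \<in> S \<and> e > 0} U"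
    using assms(1) unfolding qtopology_def openin_topology_generated_by_iff .
  then show ?thesis
    using assms(2)
  proof (induction arbitrary: x rule: generate_topology_on.induct)
    case (Int U V)
    then obtain e1 e2 where "e1 > 0" "qball S d x e1 \<subseteq> U" "e2 > 0" "qball S d x e2 \<subseteq> V" by blast
    then show ?case by (intro exI[of _ "min e1 e2"]) (auto simp: qball_def)
  next
    case (UN K)
    then show ?case by blast
  next
    case (Basis U)
    then obtain c r where U: "U = qball S d c r" "c \<in> S" by blast
    with Basis.prems have x: "x \<in> S" "d c x < r" by (auto simp: qball_def)
    have "qball S d x (r - d c x) \<subseteq> U"
    proof
      fix y assume "y \<in> qball S d x (r - d c x)"
      moreover have "y \<in> S \<Longrightarrow> d c y \<le> d c x + d x y" using triangle U(2) x(1) by blast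
      ultimately show "y \<in> U" using U by (auto simp: qball_def)
    qed
    then show ?case using x(2) by (intro exI[of _ "r - d c x"]) auto
  qed simp
qed

lemma openin_qtopologyI:
  assumes "U \<subseteq> S" "\<And>x. x \<in> U \<Longrightarrow> \<exists>e>0. qball S d x e \<subseteq> U"
  shows "openin (qtopology S d) U"
  unfolding openin_subopen[of _ U]
proof
  fix x assume "x \<in> U"
  then obtain e where e: "e > 0" "qball S d x e \<subseteq> U" and "x \<in> S" using assms by blast
  then show "\<exists>T. openin (qtopology S d) T \<and> x \<in> T \<and> T \<subseteq> U"
    using openin_qball[OF \<open>x \<in> S\<close> e(1)] centre_mem_qball[OF \<open>x \<in> S\<close> e(1)] by blast
qed

lemma quasi_pseudometric_qhat: "quasi_pseudometric S (qhat d)"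
proof
  fix x y z assume "x \<in> S" "y \<in> S" "z \<in> S"
  then show "qhat d x z \<le> qhat d x y + qhat d y z"
    using triangle[of x y z] triangle[of z y x] unfolding qhat_def by linarith
qed (simp add: qhat_def self)

lemma limitin_qtopology_qhatI:
  assumes "x \<in> S" "range s \<subseteq> S"
    and "\<And>e. e > 0 \<Longrightarrow> eventually (\<lambda>n. qhat d x (s n) < e) sequentially"
  shows "limitin (qtopology S (qhat d)) s x sequentially"
  unfolding limitin_def
proof (intro conjI allI impI)
  interpret qhat: quasi_pseudometric S "qhat d" by (rule quasi_pseudometric_qhat)
  show "x \<in> topspace (qtopology S (qhat d))" using assms(1) by simp
  fix U assume "openin (qtopology S (qhat d)) U \<and> x \<in> U"
  then obtain e where "e > 0" "qball S (qhat d) x e \<subseteq> U"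
    using qhat.openin_qtopology_imp_qball_subset by blast
  then show "\<forall>\<^sub>F n in sequentially. s n \<in> U"
    using assms(3)[of e] assms(2) by (auto simp: qball_def elim!: eventually_mono)
qed

lemma limitin_qtopology_qhatD:
  assumes "limitin (qtopology S (qhat d)) s x sequentially"
  shows "x \<in> S" "e > 0 \<Longrightarrow> eventually (\<lambda>n. d x (s n) < e \<and> d (s n) x < e) sequentially"
proof -
  interpret qhat: quasi_pseudometric S "qhat d" by (rule quasi_pseudometric_qhat)
  show x: "x \<in> S" using assms by (simp add: limitin_def)
  assume "e > 0"
  then have "\<forall>\<^sub>F n in sequentially. s n \<in> qball S (qhat d) x e"
    using assms openin_qball[OF x \<open>e > 0\<close>] qhat.centre_mem_qball[OF x \<open>e > 0\<close>]
    unfolding limitin_def by blast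
  then show "eventually (\<lambda>n. d x (s n) < e \<and> d (s n) x < e) sequentially"
    by (auto simp: qball_def qhat_def elim!: eventually_mono)
qed

end

lemma quasi_pseudometric_if_quasi_metric_on: "quasi_metric_on S d \<Longrightarrow> quasi_pseudometric S d"
  unfolding quasi_metric_on_def by unfold_locales blast+

section \<open>A quasi-metric from a sequence of relations\<close>

definition weighted_dist :: "(nat \<Rightarrow> 'a \<Rightarrow> 'a \<Rightarrow> bool) \<Rightarrow> 'a \<Rightarrow> 'a \<Rightarrow> real" where
  "weighted_dist c x y = (\<Sum>k. if c k x y then (1/2) ^ Suc k else 0)"

lemma summable_weighted_dist: "summable (\<lambda>k. if c k x y then (1/2::real) ^ Suc k else 0)"
  by (rule summable_comparison_test'[of "\<lambda>k. (1/2::real) ^ Suc k" 0])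
    (use power_half_series sums_summable in auto)

lemma weighted_dist_nonneg: "0 \<le> weighted_dist c x y"
  unfolding weighted_dist_def by (rule suminf_nonneg[OF summable_weighted_dist]) auto

lemma weighted_dist_ge: "c k x y \<Longrightarrow> (1/2) ^ Suc k \<le> weighted_dist c x y"
  unfolding weighted_dist_def
  using sum_le_suminf[OF summable_weighted_dist, of "{k}" c x y] by auto

lemma weighted_dist_eq_0_iff: "weighted_dist c x y = 0 \<longleftrightarrow> (\<forall>k. \<not> c k x y)"
  unfolding weighted_dist_def
  using suminf_eq_zero_iff[OF summable_weighted_dist, of c x y] by auto

lemma weighted_dist_triangle:
  assumes "\<And>k. c k x z \<Longrightarrow> c k x y \<or> c k y z"
  shows "weighted_dist c x z \<le> weighted_dist c x y + weighted_dist c y z"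
proof -
  have "weighted_dist c x z \<le>
      (\<Sum>k. (if c k x y then (1/2::real) ^ Suc k else 0) + (if c k y z then (1/2) ^ Suc k else 0))"
    unfolding weighted_dist_def
    by (rule suminf_le) (use assms in \<open>auto intro: summable_add summable_weighted_dist\<close>)
  also have "\<dots> = weighted_dist c x y + weighted_dist c y z"
    unfolding weighted_dist_def by (rule suminf_add[OF summable_weighted_dist summable_weighted_dist, symmetric])
  finally show ?thesis .
qed

lemma weighted_dist_le:
  assumes "\<forall>k\<le>N. \<not> c k x y"
  shows "weighted_dist c x y \<le> (1/2) ^ Suc N"
proof -
  let ?f = "\<lambda>k. if c k x y then (1/2::real) ^ Suc k else 0"
  have "weighted_dist c x y = (\<Sum>n. ?f (n + Suc N)) + (\<Sum>i<Suc N. ?f i)"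
    unfolding weighted_dist_def by (rule suminf_split_initial_segment[OF summable_weighted_dist])
  also have "(\<Sum>i<Suc N. ?f i) = 0" using assms by auto
  also have "(\<Sum>n. ?f (n + Suc N)) \<le> (\<Sum>n. (1/2) ^ Suc N * (1/2::real) ^ Suc n)"
  proof (rule suminf_le)
    show "summable (\<lambda>n. ?f (n + Suc N))"
      by (rule summable_ignore_initial_segment[OF summable_weighted_dist])
    show "summable (\<lambda>n. (1/2) ^ Suc N * (1/2::real) ^ Suc n)"
      using power_half_series sums_summable summable_mult by blast
  qed (auto simp: power_add[symmetric])
  also have "(\<Sum>n. (1/2) ^ Suc N * (1/2::real) ^ Suc n) = (1/2) ^ Suc N"
    using sums_mult[OF power_half_series, of "(1/2) ^ Suc N"] sums_unique by fastforce
  finally show ?thesis by simp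
qed

lemma exists_half_power_less: "(e::real) > 0 \<Longrightarrow> \<exists>N. (1/2) ^ Suc N < e"
proof -
  assume "e > 0"
  then obtain N where "(1/2::real) ^ N < e" using real_arch_pow_inv[of e "1/2"] by auto
  moreover have "(1/2::real) ^ Suc N \<le> (1/2) ^ N" by simp
  ultimately show ?thesis by (meson le_less_trans)
qed

lemma weighted_dist_less_half_power_imp:
  "weighted_dist c x y < (1/2) ^ Suc k \<Longrightarrow> \<not> c k x y"
  using weighted_dist_ge by fastforce

lemma qcauchy_weighted_dist_imp:
  assumes "qcauchy (weighted_dist c) s"
  shows "\<exists>N. \<forall>n m. N \<le> n \<and> n \<le> m \<longrightarrow> \<not> c k (s n) (s m)"
proof -
  have "(0::real) < (1/2) ^ Suc k" by simp
  then obtain N where "\<forall>n m. N \<le> n \<and> n \<le> m \<longrightarrow> weighted_dist c (s n) (s m) < (1/2) ^ Suc k"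
    using assms unfolding qcauchy_def by blast
  then show ?thesis by (meson weighted_dist_less_half_power_imp)
qed

lemma eventually_weighted_dist_less:
  assumes "\<And>k. eventually (\<lambda>z. \<not> c k x (f z)) F" and "e > 0"
  shows "eventually (\<lambda>z. weighted_dist c x (f z) < e) F"
proof -
  obtain N where N: "(1/2) ^ Suc N < e" using exists_half_power_less[OF \<open>e > 0\<close>] by blast
  have "eventually (\<lambda>z. \<forall>k\<in>{..N}. \<not> c k x (f z)) F"
    using assms(1) by (simp add: eventually_ball_finite)
  then show ?thesis
  proof eventually_elim
    case (elim z)
    then have "weighted_dist c x (f z) \<le> (1/2) ^ Suc N" by (intro weighted_dist_le) auto
    then show ?case using N by linarith
  qed
qed

section \<open>From a presentation to a complete quasi-metric\<close>

definition first_witness :: "('i \<Rightarrow> nat \<Rightarrow> bool) \<Rightarrow> 'i \<Rightarrow> nat set \<Rightarrow> enat" where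
  "first_witness J i A = (if \<exists>j\<in>A. J i j then enat (LEAST j. j \<in> A \<and> J i j) else \<infinity>)"

lemma first_witness_le: "j \<in> A \<Longrightarrow> J i j \<Longrightarrow> first_witness J i A \<le> enat j"
  unfolding first_witness_def by (auto intro: Least_le)

lemma first_witness_eq_enatD: "first_witness J i A = enat j \<Longrightarrow> j \<in> A \<and> J i j"
  unfolding first_witness_def by (auto split: if_splits intro: LeastI2_ex)

lemma first_witness_eq_infinity_iff: "first_witness J i A = \<infinity> \<longleftrightarrow> \<not> (\<exists>j\<in>A. J i j)"
  unfolding first_witness_def by auto

lemma first_witness_eventually_eq:
  assumes A: "\<And>n. eventually (\<lambda>m. n \<in> A m \<longleftrightarrow> n \<in> A') sequentially"
    and v: "eventually (\<lambda>m. first_witness J i (A m) = v) sequentially"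
  shows "first_witness J i A' = v"
proof (rule linorder_cases)
  assume "first_witness J i A' < v"
  then obtain j where j: "first_witness J i A' = enat j" by (cases "first_witness J i A'") auto
  then have "eventually (\<lambda>m. j \<in> A m \<and> J i j) sequentially"
    using A[of j] first_witness_eq_enatD[OF j] by (auto elim: eventually_mono)
  with v have "eventually (\<lambda>m. v \<le> enat j) sequentially"
    by eventually_elim (auto dest: first_witness_le)
  then show ?thesis using \<open>first_witness J i A' < v\<close> j by simp
next
  assume less: "v < first_witness J i A'"
  then obtain j where j: "v = enat j" by (cases v) auto
  have "eventually (\<lambda>m. j \<in> A' \<and> J i j) sequentially"
    using A[of j] v unfolding j by eventually_elim (auto dest: first_witness_eq_enatD)
  then have "first_witness J i A' \<le> v"
    unfolding j by (auto intro: first_witness_le dest: eventually_happens)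
  then show ?thesis using less by simp
qed

lemma eventually_const_if_eventually_antimono:
  fixes f :: "nat \<Rightarrow> 'b::wellorder"
  assumes "\<And>n m. N \<le> n \<Longrightarrow> n \<le> m \<Longrightarrow> f m \<le> f n"
  shows "\<exists>v. eventually (\<lambda>m. f m = v) sequentially"
proof -
  obtain m0 where m0: "m0 \<ge> N" "f m0 = (LEAST v. \<exists>m\<ge>N. f m = v)"
    using LeastI_ex[of "\<lambda>v. \<exists>m\<ge>N. f m = v"] by blast
  have "f m = f m0" if "m \<ge> m0" for m
  proof (rule antisym)
    show "f m \<le> f m0" using assms m0(1) that by blast
    show "f m0 \<le> f m" unfolding m0(2) using m0(1) that by (intro Least_le exI[of _ m]) simp
  qed
  then show ?thesis unfolding eventually_sequentially by blast
qed

lemma nat_even_odd_cases: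
  obtains n where "k = 2 * n" | m where "k = Suc (2 * m)"
  by (metis oddE evenE Suc_eq_plus1)

definition presentation_test ::
    "(nat \<Rightarrow> 'a set) \<Rightarrow> ('i::countable \<Rightarrow> nat \<Rightarrow> bool) \<Rightarrow> nat \<Rightarrow> 'a \<Rightarrow> 'a \<Rightarrow> bool" where
  "presentation_test B J k x y =
     (if even k then k div 2 \<in> nbhd_codes B x \<and> k div 2 \<notin> nbhd_codes B y
      else first_witness J (from_nat (k div 2)) (nbhd_codes B x)
         < first_witness J (from_nat (k div 2)) (nbhd_codes B y))"

definition presentation_qmetric ::
    "(nat \<Rightarrow> 'a set) \<Rightarrow> ('i::countable \<Rightarrow> nat \<Rightarrow> bool) \<Rightarrow> 'a \<Rightarrow> 'a \<Rightarrow> real" where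
  "presentation_qmetric B J = weighted_dist (presentation_test B J)"

lemma presentation_test_even:
  "presentation_test B J (2 * n) x y \<longleftrightarrow> n \<in> nbhd_codes B x \<and> n \<notin> nbhd_codes B y"
  unfolding presentation_test_def by simp

lemma presentation_test_odd:
  "presentation_test B J (Suc (2 * m)) x y \<longleftrightarrow>
     first_witness J (from_nat m) (nbhd_codes B x) < first_witness J (from_nat m) (nbhd_codes B y)"
  unfolding presentation_test_def by simp

lemma quasi_pseudometric_presentation_qmetric:
  "quasi_pseudometric S (presentation_qmetric B J)"
  unfolding presentation_qmetric_def
  by unfold_locales
    (auto simp: weighted_dist_eq_0_iff presentation_test_def
      intro!: weighted_dist_triangle split: if_splits)

lemma quasi_metric_on_presentation_qmetric:
  assumes T0: "inj_on (nbhd_codes B) S"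
  shows "quasi_metric_on S (presentation_qmetric B J)"
proof -
  interpret quasi_pseudometric S "presentation_qmetric B J"
    by (rule quasi_pseudometric_presentation_qmetric)
  have "x = y" if "x \<in> S" "y \<in> S"
    "presentation_qmetric B J x y = 0" "presentation_qmetric B J y x = 0" for x y
  proof -
    have "\<not> presentation_test B J (2 * n) x y" "\<not> presentation_test B J (2 * n) y x" for n
      using that(3,4) unfolding presentation_qmetric_def weighted_dist_eq_0_iff by blast+
    then have "nbhd_codes B x = nbhd_codes B y"
      unfolding presentation_test_even by blast
    then show "x = y" using T0 that(1,2) by (meson inj_onD)
  qed
  then show ?thesis
    unfolding quasi_metric_on_def
    using self triangle by (auto simp: presentation_qmetric_def weighted_dist_nonneg)
qed

lemma eventually_not_presentation_test:
  assumes B: "enum_base X B" and x: "x \<in> topspace X"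
  shows "eventually (\<lambda>z. \<not> presentation_test B J k x z) (nhdsin X x)"
proof (cases k rule: nat_even_odd_cases)
  case (1 n)
  show ?thesis
  proof (cases "x \<in> B n")
    case True
    then show ?thesis
      unfolding eventually_nhdsin 1 presentation_test_even
      using enum_base_openin[OF B] by (auto simp: nbhd_codes_def)
  next
    case False
    then show ?thesis
      by (simp add: 1 presentation_test_even nbhd_codes_def)
  qed
next
  case (2 m)
  show ?thesis
  proof (cases "first_witness J (from_nat m) (nbhd_codes B x)")
    case (enat j)
    then have j: "x \<in> B j" "J (from_nat m) j"
      using first_witness_eq_enatD[OF enat] by (auto simp: nbhd_codes_def)
    have "\<not> presentation_test B J k x z" if "z \<in> B j" for z
      using first_witness_le[of j "nbhd_codes B z" J "from_nat m"] that j(2) enat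
      by (auto simp: 2 presentation_test_odd nbhd_codes_def)
    then show ?thesis
      unfolding eventually_nhdsin using enum_base_openin[OF B] j(1) by blast
  next
    case infinity
    then show ?thesis by (simp add: 2 presentation_test_odd)
  qed
qed

lemma qtopology_presentation_qmetric:
  assumes B: "enum_base X B"
  shows "X = qtopology (topspace X) (presentation_qmetric B J)"
proof -
  interpret quasi_pseudometric "topspace X" "presentation_qmetric B J"
    by (rule quasi_pseudometric_presentation_qmetric)
  have "openin X U \<longleftrightarrow> openin (qtopology (topspace X) (presentation_qmetric B J)) U" for U
  proof
    assume U: "openin X U"
    show "openin (qtopology (topspace X) (presentation_qmetric B J)) U"
    proof (rule openin_qtopologyI)
      show "U \<subseteq> topspace X" using U openin_subset by blast
      fix x assume "x \<in> U"
      then obtain n where n: "x \<in> B n" "B n \<subseteq> U" using enum_baseD[OF B U] by blast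
      have "qball (topspace X) (presentation_qmetric B J) x ((1/2) ^ Suc (2 * n)) \<subseteq> B n"
        using n(1) weighted_dist_less_half_power_imp[of "presentation_test B J" x _ "2 * n"]
        by (auto simp: qball_def presentation_qmetric_def presentation_test_even nbhd_codes_def)
      then show "\<exists>e>0. qball (topspace X) (presentation_qmetric B J) x e \<subseteq> U"
        using n(2) by (intro exI[of _ "(1/2) ^ Suc (2 * n)"]) auto
    qed
  next
    assume U: "openin (qtopology (topspace X) (presentation_qmetric B J)) U"
    have "\<exists>V. openin X V \<and> x \<in> V \<and> V \<subseteq> U" if "x \<in> U" for x
    proof -
      have x: "x \<in> topspace X" using U openin_subset that by fastforce
      obtain e where e: "e > 0" "qball (topspace X) (presentation_qmetric B J) x e \<subseteq> U"
        using openin_qtopology_imp_qball_subset[OF U \<open>x \<in> U\<close>] by blast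
      have "eventually (\<lambda>z. presentation_qmetric B J x z < e) (nhdsin X x)"
        unfolding presentation_qmetric_def
        by (intro eventually_weighted_dist_less eventually_not_presentation_test[OF B x] e(1))
      then obtain V where "openin X V" "x \<in> V" "\<forall>z\<in>V. presentation_qmetric B J x z < e"
        using x unfolding eventually_nhdsin by blast
      then show ?thesis
        using e(2) openin_subset[of X V] by (intro exI[of _ V]) (auto simp: qball_def)
    qed
    then show "openin X U" by (subst openin_subopen) blast
  qed
  then show ?thesis by (simp add: topology_eq)
qed

definition limit_codes :: "(nat \<Rightarrow> 'a set) \<Rightarrow> (nat \<Rightarrow> 'a) \<Rightarrow> nat set" where
  "limit_codes B s = {n. eventually (\<lambda>m. n \<in> nbhd_codes B (s m)) sequentially}"

context
  fixes B :: "nat \<Rightarrow> 'a set" and J :: "'i::countable \<Rightarrow> nat \<Rightarrow> bool" and s :: "nat \<Rightarrow> 'a"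
  assumes cauchy: "qcauchy (presentation_qmetric B J) s"
begin

lemma eventually_mem_nbhd_codes_iff_limit_codes:
  "eventually (\<lambda>m. n \<in> nbhd_codes B (s m) \<longleftrightarrow> n \<in> limit_codes B s) sequentially"
proof (cases "n \<in> limit_codes B s")
  case True
  then show ?thesis unfolding limit_codes_def by (auto elim: eventually_mono)
next
  case False
  obtain N where N: "\<forall>a m. N \<le> a \<and> a \<le> m \<longrightarrow> \<not> presentation_test B J (2 * n) (s a) (s m)"
    using qcauchy_weighted_dist_imp cauchy unfolding presentation_qmetric_def by blast
  have "n \<notin> nbhd_codes B (s a)" if "a \<ge> N" for a
  proof
    assume "n \<in> nbhd_codes B (s a)"
    then have "\<forall>m\<ge>a. n \<in> nbhd_codes B (s m)"
      using N that unfolding presentation_test_even by blast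
    then show False using False unfolding limit_codes_def eventually_sequentially by blast
  qed
  then show ?thesis using False unfolding eventually_sequentially by blast
qed

lemma eventually_first_witness_eq_limit_codes:
  "eventually (\<lambda>m. first_witness J i (nbhd_codes B (s m)) = first_witness J i (limit_codes B s))
     sequentially"
proof -
  obtain N where "\<forall>a m. N \<le> a \<and> a \<le> m \<longrightarrow> \<not> presentation_test B J (Suc (2 * to_nat i)) (s a) (s m)"
    using qcauchy_weighted_dist_imp cauchy unfolding presentation_qmetric_def by blast
  then have "\<And>a m. N \<le> a \<Longrightarrow> a \<le> m \<Longrightarrow>
      first_witness J i (nbhd_codes B (s m)) \<le> first_witness J i (nbhd_codes B (s a))"
    unfolding presentation_test_odd by (simp add: not_less)
  then have "\<exists>v. eventually (\<lambda>m. first_witness J i (nbhd_codes B (s m)) = v) sequentially"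
    by (rule eventually_const_if_eventually_antimono)
  then obtain v where v: "eventually (\<lambda>m. first_witness J i (nbhd_codes B (s m)) = v) sequentially"
    by blast
  moreover have "first_witness J i (limit_codes B s) = v"
    using first_witness_eventually_eq[OF eventually_mem_nbhd_codes_iff_limit_codes v] .
  ultimately show ?thesis by simp
qed

lemma limitin_presentation_qmetric_if_limit_codes:
  assumes x: "x \<in> S" "nbhd_codes B x = limit_codes B s" and s: "range s \<subseteq> S"
  shows "limitin (qtopology S (qhat (presentation_qmetric B J))) s x sequentially"
proof -
  interpret quasi_pseudometric S "presentation_qmetric B J"
    by (rule quasi_pseudometric_presentation_qmetric)
  have "eventually (\<lambda>m. \<not> presentation_test B J k x (s m) \<and> \<not> presentation_test B J k (s m) x)
      sequentially" for k
  proof (cases k rule: nat_even_odd_cases)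
    case (1 n)
    show ?thesis
      using eventually_mem_nbhd_codes_iff_limit_codes[of n]
      unfolding 1 presentation_test_even x(2) by (auto elim: eventually_mono)
  next
    case (2 m)
    show ?thesis
      using eventually_first_witness_eq_limit_codes[of "from_nat m"]
      unfolding 2 presentation_test_odd x(2) by (auto elim: eventually_mono)
  qed
  note tests = this
  have "eventually (\<lambda>m. presentation_qmetric B J x (s m) < e) sequentially" if "e > 0" for e
    unfolding presentation_qmetric_def
    by (rule eventually_weighted_dist_less[OF _ that], rule eventually_mono[OF tests]) blast
  moreover have "eventually (\<lambda>m. presentation_qmetric B J (s m) x < e) sequentially" if "e > 0" for e
  proof -
    have "presentation_qmetric B J (s m) x = weighted_dist (\<lambda>k y z. presentation_test B J k z y) x (s m)"
      for m by (simp add: presentation_qmetric_def weighted_dist_def)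
    moreover have "eventually (\<lambda>m. weighted_dist (\<lambda>k y z. presentation_test B J k z y) x (s m) < e)
        sequentially"
      by (rule eventually_weighted_dist_less[OF _ that], rule eventually_mono[OF tests]) blast
    ultimately show ?thesis by simp
  qed
  ultimately show ?thesis
    using x(1) s
    by (intro limitin_qtopology_qhatI) (auto simp: qhat_def intro: eventually_conj)
qed

lemma limit_codes_satisfies_presentation:
  assumes pres: "pi02_presentation X B F J" and s: "range s \<subseteq> topspace X"
    and Fi: "F i \<subseteq> limit_codes B s"
  shows "\<exists>j\<in>limit_codes B s. J i j"
proof -
  have fin: "finite (F i)" and char: "\<And>x. x \<in> topspace X \<Longrightarrow> F i \<subseteq> nbhd_codes B x \<Longrightarrow>
      \<exists>j\<in>nbhd_codes B x. J i j"
    using pres unfolding pi02_presentation_def by blast+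
  have "eventually (\<lambda>m. \<forall>n\<in>F i. n \<in> nbhd_codes B (s m)) sequentially"
    using Fi unfolding limit_codes_def by (intro eventually_ball_finite[OF fin]) blast
  then have "eventually (\<lambda>m. first_witness J i (nbhd_codes B (s m)) \<noteq> \<infinity>) sequentially"
  proof (rule eventually_mono)
    fix m assume "\<forall>n\<in>F i. n \<in> nbhd_codes B (s m)"
    then have "\<exists>j\<in>nbhd_codes B (s m). J i j" using char s by blast
    then show "first_witness J i (nbhd_codes B (s m)) \<noteq> \<infinity>"
      by (simp add: first_witness_eq_infinity_iff)
  qed
  then have "eventually (\<lambda>m. first_witness J i (limit_codes B s) \<noteq> \<infinity>) sequentially"
    using eventually_first_witness_eq_limit_codes[of i] by eventually_elim simp
  then have "first_witness J i (limit_codes B s) \<noteq> \<infinity>"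
    by (simp add: eventually_const)
  then show ?thesis by (simp add: first_witness_eq_infinity_iff)
qed

end

lemma qcomplete_presentation_qmetric:
  fixes F :: "'i::countable \<Rightarrow> nat set"
  assumes pres: "pi02_presentation X B F J"
  shows "qcomplete (topspace X) (presentation_qmetric B J)"
  unfolding qcomplete_def
proof (intro allI impI)
  fix s assume s: "range s \<subseteq> topspace X \<and> qcauchy (presentation_qmetric B J) s"
  then have "\<forall>i. F i \<subseteq> limit_codes B s \<longrightarrow> (\<exists>j\<in>limit_codes B s. J i j)"
    using limit_codes_satisfies_presentation[OF _ pres] by blast
  then obtain x where x: "x \<in> topspace X" "nbhd_codes B x = limit_codes B s"
    using pres unfolding pi02_presentation_def by metis
  show "\<exists>x. limitin (qtopology (topspace X) (qhat (presentation_qmetric B J))) s x sequentially"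
    by (intro exI[of _ x] limitin_presentation_qmetric_if_limit_codes) (use s x in auto)
qed

lemma quasi_Polish_if_pi02_presentation:
  fixes F :: "'i::countable \<Rightarrow> nat set"
  assumes "second_countable X" "enum_base X B" "inj_on (nbhd_codes B) (topspace X)"
    "pi02_presentation X B F J"
  shows "quasi_Polish X"
  unfolding quasi_Polish_def
  using quasi_metric_on_presentation_qmetric[OF assms(3)] qtopology_presentation_qmetric[OF assms(2)]
    qcomplete_presentation_qmetric[OF assms(4)] assms(1) by blast

section \<open>A presentation of a quasi-Polish space\<close>

text \<open>\<open>B j\<close> lies in a ball of radius at most \<open>2^-k\<close> whose double lies in \<open>B n \<inter> B m\<close>; the centres
  of a chain of such refinements form a Cauchy sequence.\<close>

definition ball_refines ::
    "'a set \<Rightarrow> ('a \<Rightarrow> 'a \<Rightarrow> real) \<Rightarrow> (nat \<Rightarrow> 'a set) \<Rightarrow> nat \<Rightarrow> nat \<Rightarrow> nat \<Rightarrow> nat \<Rightarrow> bool" where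
  "ball_refines S d B k n m j \<longleftrightarrow> (\<exists>c r. c \<in> S \<and> 0 < r \<and> r \<le> (1/2) ^ k \<and> c \<in> B j \<and>
     B j \<subseteq> qball S d c r \<and> qball S d c (2 * r) \<subseteq> B n \<inter> B m)"

locale quasi_metric_base =
  fixes X :: "'a topology" and d :: "'a \<Rightarrow> 'a \<Rightarrow> real" and B :: "nat \<Rightarrow> 'a set"
  assumes quasi_metric: "quasi_metric_on (topspace X) d"
    and qtopology: "X = qtopology (topspace X) d"
    and base: "enum_base X B"
begin

sublocale quasi_pseudometric "topspace X" d
  by (rule quasi_pseudometric_if_quasi_metric_on[OF quasi_metric])

lemma qball_openin: "x \<in> topspace X \<Longrightarrow> e > 0 \<Longrightarrow> openin X (qball (topspace X) d x e)"
  using openin_qball[of x "topspace X" e d] by (simp only: qtopology[symmetric])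

lemma openin_imp_qball_subset: "openin X U \<Longrightarrow> x \<in> U \<Longrightarrow> \<exists>e>0. qball (topspace X) d x e \<subseteq> U"
  using openin_qtopology_imp_qball_subset by (simp only: qtopology[symmetric])

lemma inj_on_nbhd_codes: "inj_on (nbhd_codes B) (topspace X)"
proof (rule inj_onI)
  fix x y assume x: "x \<in> topspace X" and y: "y \<in> topspace X"
    and same: "nbhd_codes B x = nbhd_codes B y"
  have "d u v \<le> 0" if u: "u \<in> topspace X" and "nbhd_codes B u = nbhd_codes B v" for u v
  proof (rule ccontr)
    assume "\<not> d u v \<le> 0"
    then have "d u v > 0" by simp
    then obtain n where "u \<in> B n" "B n \<subseteq> qball (topspace X) d u (d u v)"
      using enum_baseD[OF base qball_openin[OF u] centre_mem_qball[OF u]] by blast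
    then show False using that(2) by (auto simp: nbhd_codes_def qball_def)
  qed
  then show "x = y"
    using x y same quasi_metric unfolding quasi_metric_on_def by (metis order_antisym)
qed

lemma ball_refines_exists:
  assumes "x \<in> B n \<inter> B m"
  obtains j where "x \<in> B j" "ball_refines (topspace X) d B k n m j"
proof -
  have x: "x \<in> topspace X" using assms enum_base_subset_topspace[OF base] by blast
  obtain e where e: "e > 0" "qball (topspace X) d x e \<subseteq> B n \<inter> B m"
    using openin_imp_qball_subset assms enum_base_openin[OF base] by (meson openin_Int)
  define r where "r = min (e/2) ((1/2::real) ^ k)"
  have r: "r > 0" "r \<le> (1/2) ^ k" "2 * r \<le> e" using e(1) by (auto simp: r_def)
  obtain j where j: "x \<in> B j" "B j \<subseteq> qball (topspace X) d x r"
    using enum_baseD[OF base qball_openin[OF x r(1)] centre_mem_qball[OF x r(1)]] by blast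
  have "qball (topspace X) d x (2 * r) \<subseteq> B n \<inter> B m"
    using e(2) qball_mono[OF r(3), of "topspace X" d x] by blast
  then show thesis using that[OF j(1)] x r j unfolding ball_refines_def by blast
qed

lemma limit_of_ball_chain:
  assumes complete: "qcomplete (topspace X) d"
    and c: "\<And>k. c k \<in> V (Suc k)" "\<And>k. V (Suc k) \<subseteq> qball (topspace X) d (c k) (r k)"
    "\<And>k. qball (topspace X) d (c k) (2 * r k) \<subseteq> V k \<inter> W k"
    and r: "\<And>k. 0 < r k" "\<And>k. r k \<le> (1/2) ^ Suc k"
  obtains l where "l \<in> topspace X" "\<And>k. l \<in> V k \<inter> W k"
    "\<And>U. openin X U \<Longrightarrow> l \<in> U \<Longrightarrow> \<exists>k. V k \<subseteq> U"
proof -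
  have "V (Suc k) \<subseteq> V k" for k
  proof -
    have "qball (topspace X) d (c k) (r k) \<subseteq> qball (topspace X) d (c k) (2 * r k)"
      using r(1)[of k] by (intro qball_mono) simp
    then show ?thesis using c(2)[of k] c(3)[of k] by blast
  qed
  then have V_antimono: "V m \<subseteq> V k" if "k \<le> m" for k m
    using lift_Suc_antimono_le[of V] that by blast
  have c_close: "d (c k) (c m) < r k" if "k \<le> m" for k m
    using c(1)[of m] V_antimono[of "Suc k" "Suc m"] c(2)[of k] that by (auto simp: qball_def)
  have cS: "range c \<subseteq> topspace X"
    using c(1) c(2) qball_subset[of "topspace X" d] by blast
  have "qcauchy d c"
    unfolding qcauchy_def
  proof (intro allI impI)
    fix e :: real assume "e > 0"
    then obtain N where N: "(1/2) ^ Suc N < e" using exists_half_power_less by blast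
    have "d (c n) (c m) < e" if "N \<le> n" "n \<le> m" for n m
    proof -
      have "(1/2::real) ^ Suc n \<le> (1/2) ^ Suc N" using that(1) by (intro power_decreasing) auto
      then show ?thesis using c_close[OF that(2)] r(2)[of n] N by linarith
    qed
    then show "\<exists>n0. \<forall>n m. n0 \<le> n \<and> n \<le> m \<longrightarrow> d (c n) (c m) < e" by blast
  qed
  then obtain l where l: "limitin (qtopology (topspace X) (qhat d)) c l sequentially"
    using complete cS unfolding qcomplete_def by blast
  note l_close = limitin_qtopology_qhatD[OF l]
  have "l \<in> V k \<inter> W k" for k
  proof -
    obtain m where "m \<ge> k" "d (c m) l < r k"
      using eventually_conj[OF l_close(2)[OF r(1)[of k]] eventually_ge_at_top[of k]]
      by (auto dest: eventually_happens)
    then have "d (c k) l < 2 * r k"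
      using triangle[of "c k" "c m" l] cS l_close(1) c_close[of k m] by (auto simp: image_subset_iff)
    then show ?thesis using c(3)[of k] l_close(1) by (auto simp: qball_def)
  qed
  moreover have "\<exists>k. V k \<subseteq> U" if U: "openin X U" "l \<in> U" for U
  proof -
    obtain e where e: "e > 0" "qball (topspace X) d l e \<subseteq> U"
      using openin_imp_qball_subset[OF U] by blast
    obtain N where N: "(1/2) ^ Suc N < e/2" using exists_half_power_less[of "e/2"] e(1) by auto
    obtain k where k: "k \<ge> N" "d l (c k) < e/2"
      using eventually_conj[OF l_close(2)[of "e/2"] eventually_ge_at_top[of N]] e(1)
      by (auto dest: eventually_happens)
    have small: "(1/2::real) ^ Suc k \<le> (1/2) ^ Suc N" using k(1) by (intro power_decreasing) auto
    have "V (Suc k) \<subseteq> qball (topspace X) d l e"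
    proof
      fix y assume "y \<in> V (Suc k)"
      then have y: "y \<in> topspace X" "d (c k) y < r k" using c(2)[of k] by (auto simp: qball_def)
      moreover have "d l y \<le> d l (c k) + d (c k) y"
        using triangle[of l "c k" y] l_close(1) cS y(1) by (auto simp: image_subset_iff)
      ultimately have "d l y < e" using k(2) r(2)[of k] small N by linarith
      then show "y \<in> qball (topspace X) d l e" using y(1) by (simp add: qball_def)
    qed
    then show ?thesis using e(2) by blast
  qed
  ultimately show thesis using that l_close(1) by blast
qed

lemma nbhd_codes_if_ball_refines:
  assumes complete: "qcomplete (topspace X) d"
    and A: "A \<noteq> {}" "upclosed_codes B A"
    and refines: "\<And>k n m. n \<in> A \<Longrightarrow> m \<in> A \<Longrightarrow> \<exists>j\<in>A. ball_refines (topspace X) d B k n m j"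
  shows "\<exists>x\<in>topspace X. A = nbhd_codes B x"
proof -
  define a where "a = from_nat_into A"
  have a: "range a = A" using A(1) by (simp add: a_def)
  obtain n where "\<forall>k. n k \<in> A \<and> ball_refines (topspace X) d B (Suc k) (n k) (a k) (n (Suc k))"
    using dependent_nat_choice[of "\<lambda>_ n. n \<in> A" "\<lambda>k n n'. ball_refines (topspace X) d B (Suc k) n (a k) n'"]
      refines a A(1) by blast
  then obtain c r where c: "\<And>k. c k \<in> B (n (Suc k))" "\<And>k. B (n (Suc k)) \<subseteq> qball (topspace X) d (c k) (r k)"
    "\<And>k. qball (topspace X) d (c k) (2 * r k) \<subseteq> B (n k) \<inter> B (a k)"
    and r: "\<And>k. 0 < r k" "\<And>k. r k \<le> (1/2) ^ Suc k" and nA: "\<And>k. n k \<in> A"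
    unfolding ball_refines_def by metis
  obtain l where l: "l \<in> topspace X" "\<And>k. l \<in> B (n k) \<inter> B (a k)"
    "\<And>U. openin X U \<Longrightarrow> l \<in> U \<Longrightarrow> \<exists>k. B (n k) \<subseteq> U"
    using limit_of_ball_chain[OF complete c r] by blast
  have "A = nbhd_codes B l"
  proof
    show "A \<subseteq> nbhd_codes B l" using l(2) a by (auto simp: nbhd_codes_def)
    show "nbhd_codes B l \<subseteq> A"
    proof
      fix m assume "m \<in> nbhd_codes B l"
      then obtain k where "B (n k) \<subseteq> B m"
        using l(3)[OF enum_base_openin[OF base, of m]] by (auto simp: nbhd_codes_def)
      then show "m \<in> A" using nA[of k] A(2) unfolding upclosed_codes_def by blast
    qed
  qed
  then show ?thesis using l(1) by blast
qed

lemma pi02_presentation_quasi_metric: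
  assumes "qcomplete (topspace X) d"
  shows "pi02_presentation X B
    (case_sum (base_conditions B) (\<lambda>(n, m, k). {n, m}))
    (case_sum (base_witness B) (\<lambda>(n, m, k). ball_refines (topspace X) d B k n m))"
proof (rule pi02_presentation_with_base_conditions[OF base])
  fix x and i :: "nat \<times> nat \<times> nat"
  assume "x \<in> topspace X" and Fi: "(case i of (n, m, k) \<Rightarrow> {n, m}) \<subseteq> nbhd_codes B x"
  obtain n m k where i: "i = (n, m, k)" by (cases i)
  with Fi have "x \<in> B n \<inter> B m" by (simp add: nbhd_codes_def)
  then obtain j where "x \<in> B j" "ball_refines (topspace X) d B k n m j" by (rule ball_refines_exists)
  then show "\<exists>j\<in>nbhd_codes B x. (case i of (n, m, k) \<Rightarrow> ball_refines (topspace X) d B k n m) j"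
    using i by (auto simp: nbhd_codes_def)
next
  fix A assume A: "A \<noteq> {}" "upclosed_codes B A"
    "\<forall>i. (case i of (n, m, k) \<Rightarrow> {n, m}) \<subseteq> A \<longrightarrow>
      (\<exists>j\<in>A. (case i of (n, m, k) \<Rightarrow> ball_refines (topspace X) d B k n m) j)"
  show "\<exists>x\<in>topspace X. A = nbhd_codes B x"
  proof (rule nbhd_codes_if_ball_refines[OF assms A(1,2)])
    fix k n m assume "n \<in> A" "m \<in> A"
    then show "\<exists>j\<in>A. ball_refines (topspace X) d B k n m j" using A(3)[rule_format, of "(n, m, k)"] by simp
  qed
qed (simp split: prod.splits)

end

section \<open>A presentation from an admissible representation with Polish domain\<close>

locale admissible_reduction =
  fixes X :: "'a topology" and B :: "nat \<Rightarrow> 'a set" and D :: "(nat \<Rightarrow> nat) set"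
    and \<rho> :: "(nat \<Rightarrow> nat) \<Rightarrow> 'a" and U :: "nat \<Rightarrow> (nat \<Rightarrow> nat) set"
    and E :: "(nat \<Rightarrow> nat) set" and g :: "(nat \<Rightarrow> nat) \<Rightarrow> nat \<Rightarrow> nat"
  assumes base: "enum_base X B" and T0: "inj_on (nbhd_codes B) (topspace X)"
    and \<rho>: "continuous_map (subtopology baire_space D) X \<rho>"
    and U: "\<And>k. openin baire_space (U k)" "D = \<Inter> (range U)"
    and g: "continuous_map (subtopology baire_space E) baire_space g"
    and std_dom: "std_dom X B = {p \<in> E. g p \<in> D}"
    and std_rep: "\<And>p. p \<in> std_dom X B \<Longrightarrow> std_rep X B p = \<rho> (g p)"
begin

definition named_by :: "nat list \<Rightarrow> 'a set" where
  "named_by t = std_rep X B ` {q \<in> std_dom X B. g q \<in> cylinder t}"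

lemma named_by_subset: "named_by t \<subseteq> \<rho> ` (cylinder t \<inter> D)"
  using std_dom std_rep by (auto simp: named_by_def)

lemma topspace_subset_named_by_Nil: "topspace X \<subseteq> named_by []"
proof
  fix x assume "x \<in> topspace X"
  then show "x \<in> named_by []"
    using std_name_in_std_dom std_rep_std_name[OF T0] unfolding named_by_def
    by (auto intro!: image_eqI[of x _ "std_name B x"])
qed

lemma openin_named_by: "openin X (named_by t)"
  unfolding openin_subopen[of X "named_by t"]
proof
  fix y assume "y \<in> named_by t"
  then obtain q where q: "q \<in> std_dom X B" "g q \<in> cylinder t" "y = std_rep X B q"
    by (auto simp: named_by_def)
  obtain K where K: "\<forall>q'\<in>cylinder (seq_prefix q K) \<inter> E. g q' \<in> cylinder t"
    using g openin_cylinder[of t] q(1,2) std_dom unfolding continuous_map_from_baire_space_iff by blast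
  obtain V where V: "openin X V" "y \<in> V" "V \<subseteq> std_rep X B ` (cylinder (seq_prefix q K) \<inter> std_dom X B)"
    using std_rep_image_cylinder_nbhd[OF T0 base q(1)] q(3) by blast
  have "V \<subseteq> named_by t"
    using V(3) K std_dom by (auto simp: named_by_def)
  then show "\<exists>T. openin X T \<and> y \<in> T \<and> T \<subseteq> named_by t" using V(1,2) by blast
qed

text \<open>Iterating these extensions builds a name as a limit of prefixes; lying in every \<open>U k\<close>
  it belongs to \<open>D\<close>, and its \<open>\<rho>\<close>-image lies in every \<open>B m\<close> requested on the way.\<close>

definition extends_into :: "nat list \<Rightarrow> nat \<Rightarrow> nat \<Rightarrow> nat \<Rightarrow> bool" where
  "extends_into s m k j \<longleftrightarrow> (\<exists>t. take (length s) t = s \<and> length s < length t \<and> cylinder t \<subseteq> U k \<and>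
     \<rho> ` (cylinder t \<inter> D) \<subseteq> B m \<and> B j \<subseteq> named_by t)"

lemma extends_into_exists:
  assumes x: "x \<in> B n" "x \<in> B m" and n: "B n \<subseteq> named_by s"
  obtains j where "x \<in> B j" "extends_into s m k j"
proof -
  obtain q where q: "q \<in> std_dom X B" "g q \<in> cylinder s" "x = std_rep X B q"
    using x(1) n by (auto simp: named_by_def)
  have gqD: "g q \<in> D" and \<rho>gq: "\<rho> (g q) = x" using q std_dom std_rep by auto
  obtain K1 where K1: "\<forall>q'\<in>cylinder (seq_prefix (g q) K1) \<inter> D. \<rho> q' \<in> B m"
    using \<rho> enum_base_openin[OF base] gqD \<rho>gq x(2) unfolding continuous_map_from_baire_space_iff by blast
  have "g q \<in> U k" using gqD U(2) by blast
  then obtain K2 where K2: "cylinder (seq_prefix (g q) K2) \<subseteq> U k"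
    using U(1)[of k] unfolding openin_baire_space_iff by blast
  define t where "t = seq_prefix (g q) (max (max K1 K2) (Suc (length s)))"
  have "take (length s) t = s" "length s < length t"
    using take_seq_prefix[OF q(2)] by (simp_all add: t_def)
  moreover have "cylinder t \<subseteq> cylinder (seq_prefix (g q) K1)" "cylinder t \<subseteq> cylinder (seq_prefix (g q) K2)"
    unfolding t_def by (simp_all add: cylinder_seq_prefix_antimono)
  then have "cylinder t \<subseteq> U k" "\<rho> ` (cylinder t \<inter> D) \<subseteq> B m"
    using K1 K2 by auto
  moreover have "x \<in> named_by t" using q by (auto simp: named_by_def t_def)
  then obtain j where "x \<in> B j" "B j \<subseteq> named_by t"
    using enum_baseD[OF base openin_named_by] by blast
  ultimately show thesis using that unfolding extends_into_def by blast
qed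

end

context admissible_reduction
begin

lemma nbhd_codes_if_extends_into:
  assumes A: "A \<noteq> {}" "upclosed_codes B A"
    and extends: "\<And>s n m k. n \<in> A \<Longrightarrow> m \<in> A \<Longrightarrow> B n \<subseteq> named_by s \<Longrightarrow> \<exists>j\<in>A. extends_into s m k j"
  shows "\<exists>x\<in>topspace X. A = nbhd_codes B x"
proof -
  define a where "a = from_nat_into A"
  have a: "range a = A" using A(1) by (simp add: a_def)
  obtain n0 where n0: "n0 \<in> A" using A(1) by blast
  have "\<exists>tn. \<forall>k. (snd (tn k) \<in> A \<and> B (snd (tn k)) \<subseteq> named_by (fst (tn k))) \<and>
      take (length (fst (tn k))) (fst (tn (Suc k))) = fst (tn k) \<and>
      length (fst (tn k)) < length (fst (tn (Suc k))) \<and> cylinder (fst (tn (Suc k))) \<subseteq> U k \<and>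
      \<rho> ` (cylinder (fst (tn (Suc k))) \<inter> D) \<subseteq> B (a k)"
  proof (rule dependent_nat_choice)
    show "\<exists>tn. snd tn \<in> A \<and> B (snd tn) \<subseteq> named_by (fst tn)"
      using n0 enum_base_subset_topspace[OF base] topspace_subset_named_by_Nil
      by (intro exI[of _ "([], n0)"]) auto
  next
    fix tn k assume "snd tn \<in> A \<and> B (snd tn) \<subseteq> named_by (fst tn)"
    then obtain j where "j \<in> A" "extends_into (fst tn) (a k) k j"
      using extends a by blast
    then show "\<exists>tn'. (snd tn' \<in> A \<and> B (snd tn') \<subseteq> named_by (fst tn')) \<and>
        take (length (fst tn)) (fst tn') = fst tn \<and> length (fst tn) < length (fst tn') \<and>
        cylinder (fst tn') \<subseteq> U k \<and> \<rho> ` (cylinder (fst tn') \<inter> D) \<subseteq> B (a k)"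
      unfolding extends_into_def by force
  qed
  then obtain tn where chain: "\<forall>k. (snd (tn k) \<in> A \<and> B (snd (tn k)) \<subseteq> named_by (fst (tn k))) \<and>
      take (length (fst (tn k))) (fst (tn (Suc k))) = fst (tn k) \<and>
      length (fst (tn k)) < length (fst (tn (Suc k))) \<and> cylinder (fst (tn (Suc k))) \<subseteq> U k \<and>
      \<rho> ` (cylinder (fst (tn (Suc k))) \<inter> D) \<subseteq> B (a k)"
    by blast
  define t where "t k = fst (tn k)" for k
  define n where "n k = snd (tn k)" for k
  have tn: "\<And>k. n k \<in> A" "\<And>k. B (n k) \<subseteq> named_by (t k)"
    "\<And>k. take (length (t k)) (t (Suc k)) = t k" "\<And>k. length (t k) < length (t (Suc k))"
    "\<And>k. cylinder (t (Suc k)) \<subseteq> U k" "\<And>k. \<rho> ` (cylinder (t (Suc k)) \<inter> D) \<subseteq> B (a k)"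
    using chain unfolding t_def n_def by blast+
  obtain p where p: "\<And>k. p \<in> cylinder (t k)" "\<And>K. cylinder (t K) \<subseteq> cylinder (seq_prefix p K)"
    using limit_of_prefix_chain[of t, OF tn(3,4)] by blast
  have pD: "p \<in> D" using p(1) tn(5) U(2) by blast
  have "A = nbhd_codes B (\<rho> p)"
  proof
    show "A \<subseteq> nbhd_codes B (\<rho> p)"
      using a p(1) pD tn(6) by (auto simp: nbhd_codes_def)
  next
    show "nbhd_codes B (\<rho> p) \<subseteq> A"
    proof
      fix m assume "m \<in> nbhd_codes B (\<rho> p)"
      then obtain K where "\<forall>q\<in>cylinder (seq_prefix p K) \<inter> D. \<rho> q \<in> B m"
        using \<rho> pD enum_base_openin[OF base] unfolding continuous_map_from_baire_space_iff nbhd_codes_def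
        by blast
      then have "B (n K) \<subseteq> B m" using tn(2)[of K] named_by_subset[of "t K"] p(2)[of K] by blast
      then show "m \<in> A" using tn(1) A(2) unfolding upclosed_codes_def by blast
    qed
  qed
  moreover have "\<rho> p \<in> topspace X"
    using \<rho> pD unfolding continuous_map_from_baire_space_iff by blast
  ultimately show ?thesis by blast
qed

lemma pi02_presentation_admissible_reduction:
  "pi02_presentation X B
    (case_sum (base_conditions B) (\<lambda>(s, n, m, k). if B n \<subseteq> named_by s then {n, m} else {}))
    (case_sum (base_witness B) (\<lambda>(s, n, m, k) j. B n \<subseteq> named_by s \<longrightarrow> extends_into s m k j))"
proof (rule pi02_presentation_with_base_conditions[OF base])
  fix x and i :: "nat list \<times> nat \<times> nat \<times> nat"
  assume x: "x \<in> topspace X"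
    and Fi: "(case i of (s, n, m, k) \<Rightarrow> if B n \<subseteq> named_by s then {n, m} else {}) \<subseteq> nbhd_codes B x"
  obtain s n m k where i: "i = (s, n, m, k)" by (cases i)
  show "\<exists>j\<in>nbhd_codes B x. (case i of (s, n, m, k) \<Rightarrow> \<lambda>j. B n \<subseteq> named_by s \<longrightarrow> extends_into s m k j) j"
  proof (cases "B n \<subseteq> named_by s")
    case True
    with Fi i have "x \<in> B n" "x \<in> B m" by (auto simp: nbhd_codes_def)
    then obtain j where "x \<in> B j" "extends_into s m k j" using True by (rule extends_into_exists)
    then show ?thesis using i by (auto simp: nbhd_codes_def)
  next
    case False
    then show ?thesis using i nbhd_codes_nonempty[OF base x] by auto
  qed
next
  fix A assume A: "A \<noteq> {}" "upclosed_codes B A"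
    "\<forall>i. (case i of (s, n, m, k) \<Rightarrow> if B n \<subseteq> named_by s then {n, m} else {}) \<subseteq> A \<longrightarrow>
      (\<exists>j\<in>A. (case i of (s, n, m, k) \<Rightarrow> \<lambda>j. B n \<subseteq> named_by s \<longrightarrow> extends_into s m k j) j)"
  show "\<exists>x\<in>topspace X. A = nbhd_codes B x"
  proof (rule nbhd_codes_if_extends_into[OF A(1,2)])
    fix s n m k assume "n \<in> A" "m \<in> A" "B n \<subseteq> named_by s"
    then show "\<exists>j\<in>A. extends_into s m k j" using A(3)[rule_format, of "(s, n, m, k)"] by simp
  qed
qed (simp split: prod.splits)

end

lemma pi02_presentation_if_admissible_rep:
  assumes adm: "admissible_rep X D \<rho>" and Polish: "Polish_space (subtopology baire_space D)"
    and B: "enum_base X B" and T0: "inj_on (nbhd_codes B) (topspace X)"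
  obtains F :: "(nat \<times> nat) option + nat list \<times> nat \<times> nat \<times> nat \<Rightarrow> nat set" and J
  where "pi02_presentation X B F J"
proof -
  have "gdelta_in baire_space D" using Polish by (simp add: Polish_subspace_baire_space_iff_gdelta)
  then obtain U :: "nat \<Rightarrow> (nat \<Rightarrow> nat) set"
    where U: "\<And>k. openin baire_space (U k)" "D = \<Inter> (range U)"
    using gdelta_in_obtain_open_seq[of baire_space D] by blast
  obtain E g where "continuous_map (subtopology baire_space E) baire_space g"
    "std_dom X B = {p \<in> E. g p \<in> D}" "\<forall>p\<in>std_dom X B. std_rep X B p = \<rho> (g p)"
    using adm continuous_map_std_rep[OF T0 B] unfolding admissible_rep_def by blast
  moreover have "continuous_map (subtopology baire_space D) X \<rho>"
    using adm unfolding admissible_rep_def by blast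
  ultimately interpret admissible_reduction X B D \<rho> U E g
    using B T0 U by unfold_locales auto
  show thesis using that pi02_presentation_admissible_reduction by blast
qed

theorem theorem48:
  fixes X :: "'a topology"
  assumes "second_countable X"
  shows "quasi_Polish X \<longleftrightarrow>
    (\<exists>D \<rho>. admissible_rep X D \<rho> \<and> Polish_space (subtopology baire_space D))"
proof -
  obtain B where B: "enum_base X B" using second_countable_imp_enum_base[OF assms] .
  show ?thesis
  proof
    assume "quasi_Polish X"
    then obtain d where d: "quasi_metric_on (topspace X) d" "X = qtopology (topspace X) d"
      and complete: "qcomplete (topspace X) d"
      unfolding quasi_Polish_def by blast
    interpret quasi_metric_base X d B using d B by unfold_locales
    have "admissible_rep X (std_dom X B) (std_rep X B)"
      by (rule admissible_rep_std_rep[OF B inj_on_nbhd_codes])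
    moreover have "Polish_space (subtopology baire_space (std_dom X B))"
      unfolding Polish_subspace_baire_space_iff_gdelta
      by (rule gdelta_in_std_dom[OF pi02_presentation_quasi_metric[OF complete]])
    ultimately show "\<exists>D \<rho>. admissible_rep X D \<rho> \<and> Polish_space (subtopology baire_space D)"
      by blast
  next
    assume "\<exists>D \<rho>. admissible_rep X D \<rho> \<and> Polish_space (subtopology baire_space D)"
    then obtain D \<rho> where adm: "admissible_rep X D \<rho>"
      and Polish: "Polish_space (subtopology baire_space D)" by blast
    have T0: "inj_on (nbhd_codes B) (topspace X)"
      by (rule inj_on_nbhd_codes_if_admissible_rep[OF adm B])
    show "quasi_Polish X"
      using pi02_presentation_if_admissible_rep[OF adm Polish B T0]
        quasi_Polish_if_pi02_presentation[OF assms B T0] by blast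
  qed
qed

end
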